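(* Let $M_n$ be the magnetization of the Curie–Weiss model $\mathbb{CW}_{0,1}$ and let $W_\infty$ be a random variable with density $e^{-x^4/12}/\int_{\mathbb{R}}e^{-u^4/12}du$. Then for all $n$ large enough, $$\sup_{a\in\mathbb{R}}\left|\mathbb{P}\!\left[\frac{M_n}{n^{3/4}}\le a\right]-\mathbb{P}[W_\infty\le a]\right|\le 11\,n^{-1/2}.$$
   Context: The Curie–Weiss measure $\mathbb{CW}_{0,1}$ on $\sigma:\{1,\dots,n\}\to\{\pm1\}$ gives to $\sigma$ probability proportional to $\exp\big(\frac{1}{2n}(\sum_{i=1}^n\sigma(i))^2\big)$; $M_n=\sum_{i=1}^n\sigma(i)$. *)

theory Defs
  imports "HOL-Analysis.Analysis"
begin

definition cw_configs :: "nat \<Rightarrow> (nat \<Rightarrow> int) set" where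
  "cw_configs n = PiE {1..n} (\<lambda>_. {-1, 1})"

definition magnetization :: "nat \<Rightarrow> (nat \<Rightarrow> int) \<Rightarrow> real" where
  "magnetization n \<sigma> = real_of_int (\<Sum>i\<in>{1..n}. \<sigma> i)"

text \<open>Unnormalised Curie-Weiss weight (beta = 1, h = 0): exp(M_n^2/(2n)).\<close>
definition cw_weight :: "nat \<Rightarrow> (nat \<Rightarrow> int) \<Rightarrow> real" where
  "cw_weight n \<sigma> = exp ((magnetization n \<sigma>)\<^sup>2 / (2 * real n))"

definition cw_prob :: "nat \<Rightarrow> ((nat \<Rightarrow> int) \<Rightarrow> bool) \<Rightarrow> real" where
  "cw_prob n P = (\<Sum>\<sigma>\<in>{\<sigma>\<in>cw_configs n. P \<sigma>}. cw_weight n \<sigma>) / (\<Sum>\<sigma>\<in>cw_configs n. cw_weight n \<sigma>)"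

definition W_inf_cdf :: "real \<Rightarrow> real" where
  "W_inf_cdf a = (LINT x:{..a}|lborel. exp (- (x ^ 4) / 12)) / (LINT u|lborel. exp (- (u ^ 4) / 12))"

end

theory Submission
  imports Defs "HOL-Probability.Probability" "HOL-Real_Asymp.Real_Asymp"
begin

text \<open>
  A configuration with \<open>k\<close> up-spins has magnetization \<open>m = 2k - n\<close>, so \<open>M\<^sub>n\<close> takes the value
  \<open>m\<close> with probability proportional to \<open>C(n,k) exp(m\<^sup>2/2n)\<close>. Summing the increments of
  \<open>ln C(n,k)\<close> with the expansion of \<open>ln((1-t)/(1+t))\<close> shows that
  \<open>ln C(n,k) + m\<^sup>2/2n + m\<^sup>4/12n\<^sup>3\<close> is constant up to an error of at most
  \<open>5/4 m\<^sup>2/n\<^sup>2 + 4/45 m\<^sup>6/n\<^sup>5 = n\<^sup>-\<^sup>1\<^sup>/\<^sup>2 g(x)\<close>, where \<open>x = m/n\<^sup>3\<^sup>/\<^sup>4\<close> and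
  \<open>g(x) = 5/4 x\<^sup>2 + 4/45 x\<^sup>6\<close>. Hence \<open>M\<^sub>n/n\<^sup>3\<^sup>/\<^sup>4\<close> lives on a grid of mesh \<open>2/n\<^sup>3\<^sup>/\<^sup>4\<close>
  with weights \<open>exp(-x\<^sup>4/12) (1 + O(n\<^sup>-\<^sup>1\<^sup>/\<^sup>2 g(x)))\<close>. Comparing with midpoint Riemann sums of
  \<open>exp(-x\<^sup>4/12)\<close> and of \<open>exp(-x\<^sup>4/12) g(x)\<close>, whose integral is at most \<open>287/80\<close> times
  that of \<open>exp(-x\<^sup>4/12)\<close>, and cutting the grid off at \<open>|x| \<le> n\<^sup>1\<^sup>/\<^sup>4\<^sup>0\<close>, every error is of
  order \<open>n\<^sup>-\<^sup>1\<^sup>/\<^sup>2\<close>, with a total constant below 11.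
\<close>

section \<open>The limiting density\<close>

definition dens :: "real \<Rightarrow> real" where "dens x = exp (- (x ^ 4) / 12)"
definition dens_sqrt :: "real \<Rightarrow> real" where "dens_sqrt x = exp (- (x ^ 4) / 24)"

definition dens_cdf :: "real \<Rightarrow> real" where "dens_cdf a = (LINT x:{..a}|lborel. dens x)"
definition dens_mass :: real where "dens_mass = (LINT x|lborel. dens x)"
definition dens_sqrt_mass :: real where "dens_sqrt_mass = (LINT x|lborel. dens_sqrt x)"

lemma W_inf_cdf_eq_dens_cdf: "W_inf_cdf a = dens_cdf a / dens_mass"
  unfolding W_inf_cdf_def dens_cdf_def dens_mass_def dens_def ..

lemma dens_pos: "0 < dens x" by (simp add: dens_def)
lemma dens_le_1: "dens x \<le> 1" by (simp add: dens_def)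
lemma dens_minus: "dens (- x) = dens x" by (simp add: dens_def)

lemma dens_le_exp_tail:
  fixes x r :: real
  assumes "r \<le> \<bar>x\<bar>" "0 \<le> r"
  shows "dens x \<le> exp (- (r ^ 4) / 12)"
proof -
  have "r ^ 4 \<le> \<bar>x\<bar> ^ 4" using assms by (intro power_mono) auto
  thus ?thesis unfolding dens_def by (simp add: power_even_abs)
qed

lemma borel_measurable_dens [measurable]: "dens \<in> borel_measurable borel"
  unfolding dens_def by measurable
lemma borel_measurable_dens_sqrt [measurable]: "dens_sqrt \<in> borel_measurable borel"
  unfolding dens_sqrt_def by measurable

text \<open>\<open>x\<^sup>4/24 \<ge> x\<^sup>2/2 - 3/2\<close> compares \<open>dens_sqrt\<close> with a Gaussian density.\<close>
lemma integrable_dens_sqrt: "integrable lborel dens_sqrt"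
proof (rule Bochner_Integration.integrable_bound)
  show "integrable lborel (\<lambda>x. (exp (3/2) * sqrt (2*pi)) * normal_density 0 1 x)"
    by (intro integrable_mult_right) auto
  show "AE x in lborel. norm (dens_sqrt x) \<le> norm (exp (3/2) * sqrt (2*pi) * normal_density 0 1 x)"
  proof (intro AE_I2)
    fix x :: real
    have "(x^2 - 6)^2 \<ge> 0" by simp
    hence "- (x ^ 4) / 24 \<le> 3/2 + (- x\<^sup>2 / 2)"
      by (simp add: power2_eq_square power4_eq_xxxx algebra_simps)
    hence "dens_sqrt x \<le> exp (3/2) * exp (- x\<^sup>2 / 2)"
      unfolding dens_sqrt_def by (simp flip: exp_add)
    thus "norm (dens_sqrt x) \<le> norm (exp (3/2) * sqrt (2*pi) * normal_density 0 1 x)"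
      by (simp add: dens_sqrt_def normal_density_def std_normal_density_def)
  qed
qed simp

lemma integrable_dens: "integrable lborel dens"
  by (rule Bochner_Integration.integrable_bound[OF integrable_dens_sqrt])
     (auto simp: dens_def dens_sqrt_def)

lemma set_integrable_dens: "A \<in> sets borel \<Longrightarrow> set_integrable lborel A dens"
  unfolding set_integrable_def by (intro integrable_mult_indicator integrable_dens) auto

lemma dens_integrable_on: "dens integrable_on {a..b}"
  by (rule set_borel_integral_eq_integral(1)) (auto intro!: set_integrable_dens)

lemma set_integral_le_integral:
  fixes f :: "real \<Rightarrow> real"
  assumes "integrable lborel f" "\<And>x. 0 \<le> f x" "A \<in> sets borel"
  shows "(LINT x:A|lborel. f x) \<le> (LINT x|lborel. f x)"
  unfolding set_lebesgue_integral_def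
  using assms by (intro integral_mono integrable_mult_indicator) (auto split: split_indicator)

lemma set_integral_nonneg_lborel:
  fixes f :: "real \<Rightarrow> real"
  assumes "\<And>x. 0 \<le> f x"
  shows "0 \<le> (LINT x:A|lborel. f x)"
  unfolding set_lebesgue_integral_def
  using assms by (intro Bochner_Integration.integral_nonneg) (auto split: split_indicator)

lemma dens_sqrt_mass_nonneg: "0 \<le> dens_sqrt_mass"
  unfolding dens_sqrt_mass_def by (intro Bochner_Integration.integral_nonneg) (auto simp: dens_sqrt_def)

lemma dens_cdf_nonneg: "0 \<le> dens_cdf a"
  unfolding dens_cdf_def by (rule set_integral_nonneg_lborel) (auto intro: less_imp_le[OF dens_pos])

lemma dens_cdf_le_mass: "dens_cdf a \<le> dens_mass"
  unfolding dens_cdf_def dens_mass_def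
  by (rule set_integral_le_integral[OF integrable_dens]) (auto intro: less_imp_le[OF dens_pos])

lemma dens_cdf_split: "a \<le> b \<Longrightarrow> dens_cdf b = dens_cdf a + integral {a..b} dens"
proof -
  assume "a \<le> b"
  hence "{..b} = {..a} \<union> {a<..b}" by auto
  hence "dens_cdf b = dens_cdf a + (LINT x:{a<..b}|lborel. dens x)"
    unfolding dens_cdf_def by (simp only:) (rule set_integral_Un; auto intro!: set_integrable_dens)
  also have "(LINT x:{a<..b}|lborel. dens x) = integral {a<..b} dens"
    by (rule set_borel_integral_eq_integral(2)) (auto intro!: set_integrable_dens)
  also have "\<dots> = integral {a..b} dens"
    by (rule integral_spike_set) (auto intro: negligible_subset[of "{a}"])
  finally show ?thesis .
qed

lemma dens_cdf_mono_lipschitz: "a \<le> b \<Longrightarrow> 0 \<le> dens_cdf b - dens_cdf a \<and> dens_cdf b - dens_cdf a \<le> b - a"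
proof -
  assume ab: "a \<le> b"
  have "integral {a..b} dens \<le> integral {a..b} (\<lambda>_. 1::real)"
    by (rule Henstock_Kurzweil_Integration.integral_le) (auto intro: dens_integrable_on dens_le_1)
  moreover have "0 \<le> integral {a..b} dens"
    by (rule Henstock_Kurzweil_Integration.integral_nonneg)
       (auto intro: dens_integrable_on less_imp_le[OF dens_pos])
  ultimately show ?thesis using dens_cdf_split[OF ab] ab by simp
qed

lemma integral_dens_le_mass: "a \<le> b \<Longrightarrow> integral {a..b} dens \<le> dens_mass"
  using dens_cdf_split[of a b] dens_cdf_le_mass[of b] dens_cdf_nonneg[of a] by linarith

lemma dens_mass_pos: "0 < dens_mass"
proof -
  have "exp (- 1 / 12) \<le> dens x" if "x \<in> {-1..1}" for x :: real
  proof -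
    from that have "\<bar>x\<bar> ^ 4 \<le> 1" by (intro power_le_one) auto
    thus ?thesis unfolding dens_def by (simp add: power_even_abs)
  qed
  hence "integral {-1..1} (\<lambda>x::real. exp (- 1 / 12)) \<le> integral {-1..1} dens"
    by (intro Henstock_Kurzweil_Integration.integral_le integrable_const_ivl dens_integrable_on)
  hence "2 * exp (- (1 / 12)) \<le> integral {-1..1} dens" by simp
  moreover have "0 < 2 * exp (- (1 / 12) :: real)" by simp
  ultimately have "0 < integral {-1..1} dens" by linarith
  with integral_dens_le_mass[of "-1" 1] show ?thesis by simp
qed

lemma set_integral_dens_tail:
  assumes A: "A \<in> sets borel" and T: "0 \<le> T" "\<And>x. x \<in> A \<Longrightarrow> T \<le> \<bar>x\<bar>"
  shows "(LINT x:A|lborel. dens x) \<le> exp (- (T ^ 4) / 24) * dens_sqrt_mass"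
proof -
  have si: "set_integrable lborel A (\<lambda>x. exp (- (T ^ 4) / 24) * dens_sqrt x)"
    unfolding set_integrable_def using A
    by (intro integrable_mult_indicator integrable_mult_right integrable_dens_sqrt) auto
  have "(LINT x:A|lborel. dens x) \<le> (LINT x:A|lborel. exp (- (T ^ 4) / 24) * dens_sqrt x)"
  proof (rule set_integral_mono[OF set_integrable_dens[OF A] si])
    fix x assume "x \<in> A"
    hence "T ^ 4 \<le> x ^ 4" using T power_mono[of T "\<bar>x\<bar>" 4] by (simp add: power_even_abs)
    hence "dens x \<le> exp (- (T ^ 4) / 24) * exp (- (x ^ 4) / 24)"
      unfolding dens_def by (simp flip: exp_add)
    thus "dens x \<le> exp (- (T ^ 4) / 24) * dens_sqrt x" unfolding dens_sqrt_def .
  qed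
  also have "\<dots> = exp (- (T ^ 4) / 24) * (LINT x:A|lborel. dens_sqrt x)"
    by (simp add: set_integral_mult_right)
  also have "\<dots> \<le> exp (- (T ^ 4) / 24) * dens_sqrt_mass"
    unfolding dens_sqrt_mass_def using A
    by (intro mult_left_mono set_integral_le_integral integrable_dens_sqrt) (auto simp: dens_sqrt_def)
  finally show ?thesis .
qed

lemma dens_cdf_left_tail: "0 \<le> T \<Longrightarrow> dens_cdf (- T) \<le> exp (- (T ^ 4) / 24) * dens_sqrt_mass"
  unfolding dens_cdf_def by (rule set_integral_dens_tail) auto

lemma dens_cdf_right_tail: "0 \<le> T \<Longrightarrow> dens_mass - dens_cdf T \<le> exp (- (T ^ 4) / 24) * dens_sqrt_mass"
proof -
  assume T: "0 \<le> T"
  have "dens_mass = (LINT x:{..T} \<union> {T<..}|lborel. dens x)"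
    unfolding dens_mass_def set_lebesgue_integral_def
    by (intro Bochner_Integration.integral_cong) (auto split: split_indicator)
  also have "\<dots> = dens_cdf T + (LINT x:{T<..}|lborel. dens x)"
    unfolding dens_cdf_def by (rule set_integral_Un) (auto intro!: set_integrable_dens)
  finally have "dens_mass - dens_cdf T = (LINT x:{T<..}|lborel. dens x)" by simp
  also have "\<dots> \<le> exp (- (T ^ 4) / 24) * dens_sqrt_mass"
    by (rule set_integral_dens_tail) (use T in auto)
  finally show ?thesis .
qed

section \<open>Two bounds on \<open>ln((1-t)/(1+t))\<close>\<close>

lemma ln_ratio_le:
  fixes t :: real
  assumes "0 \<le> t" "t < 1"
  shows "ln (1 - t) - ln (1 + t) \<le> - 2 * t - 2/3 * t^3"
proof -
  define \<phi> where "\<phi> x = ln (1 - x) - ln (1 + x) + 2 * x + 2/3 * x^3" for x :: real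
  have "\<phi> t \<le> \<phi> 0"
  proof (rule DERIV_nonpos_imp_decreasing_open[OF assms(1)])
    fix x :: real assume x: "0 < x" "x < t"
    have x1: "x < 1" "-1 < x" "0 < 1 + x" "0 < 1 - x" using x assms by auto
    have "(\<phi> has_real_derivative (- 1 / (1 - x) - 1 / (1 + x) + 2 + 2 * x^2)) (at x)"
      unfolding \<phi>_def by (rule derivative_eq_intros refl | simp add: x1)+
    moreover have "- 1 / (1 - x) - 1 / (1 + x) + 2 + 2 * x^2 = - 2 * x^4 / ((1 - x) * (1 + x))"
      using x1 by (simp add: divide_simps) algebra
    moreover have "- 2 * x^4 / ((1 - x) * (1 + x)) \<le> 0"
      using x1 by (intro divide_nonpos_pos) auto
    ultimately show "\<exists>y. (\<phi> has_real_derivative y) (at x) \<and> y \<le> 0" by auto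
  qed (unfold \<phi>_def, use assms in \<open>intro continuous_intros, auto\<close>)
  thus ?thesis unfolding \<phi>_def by simp
qed

lemma ln_ratio_ge:
  fixes t :: real
  assumes "0 \<le> t" "t \<le> 1/2"
  shows "- 2 * t - 2/3 * t^3 - 8/15 * t^5 \<le> ln (1 - t) - ln (1 + t)"
proof -
  define \<phi> where "\<phi> x = ln (1 - x) - ln (1 + x) + 2 * x + 2/3 * x^3 + 8/15 * x^5" for x :: real
  have "\<phi> 0 \<le> \<phi> t"
  proof (rule DERIV_nonneg_imp_increasing_open[OF assms(1)])
    fix x :: real assume x: "0 < x" "x < t"
    have x1: "x < 1" "-1 < x" "0 < 1 + x" "0 < 1 - x" using x assms by auto
    have "(\<phi> has_real_derivative (- 1 / (1 - x) - 1 / (1 + x) + 2 + 2 * x^2 + 8/3 * x^4)) (at x)"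
      unfolding \<phi>_def by (rule derivative_eq_intros refl | simp add: x1)+
    moreover have "- 1 / (1 - x) - 1 / (1 + x) + 2 + 2 * x^2 + 8/3 * x^4
        = x^4 * (2 - 8 * x^2) / (3 * ((1 - x) * (1 + x)))"
      using x1 by (simp add: divide_simps) algebra
    moreover have "x^2 \<le> 1/4" using x assms power_mono[of x "1/2" 2] by (simp add: power2_eq_square)
    hence "0 \<le> x^4 * (2 - 8 * x^2) / (3 * ((1 - x) * (1 + x)))"
      using x1 by (intro divide_nonneg_pos mult_nonneg_nonneg) auto
    ultimately show "\<exists>y. (\<phi> has_real_derivative y) (at x) \<and> y \<ge> 0" by auto
  qed (unfold \<phi>_def, use assms in \<open>intro continuous_intros, auto\<close>)
  thus ?thesis unfolding \<phi>_def by simp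
qed

section \<open>The corrected log-weight of a level\<close>

text \<open>
  Level \<open>k\<close> consists of the configurations with \<open>k\<close> up-spins; its magnetization is \<open>mag n k\<close>.
  \<open>log_corr n k\<close> is the logarithm of the total weight of the level, multiplied by \<open>exp(x\<^sup>4/12)\<close>
  at \<open>x = mag n k / n\<^sup>3\<^sup>/\<^sup>4\<close>.
\<close>
definition mag :: "nat \<Rightarrow> nat \<Rightarrow> real" where "mag n k = 2 * real k - real n"

definition log_corr :: "nat \<Rightarrow> nat \<Rightarrow> real" where
  "log_corr n k = ln (real (n choose k)) + (mag n k)^2 / (2 * real n) + (mag n k)^4 / (12 * real n ^ 3)"

definition log_corr_incr :: "nat \<Rightarrow> nat \<Rightarrow> real" where
  "log_corr_incr n k = ln (real (n - k)) - ln (real k + 1) + ((mag n k + 2)^2 - (mag n k)^2) / (2 * real n)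
     + ((mag n k + 2)^4 - (mag n k)^4) / (12 * real n ^ 3)"

definition mid_level :: "nat \<Rightarrow> nat" where "mid_level n = (n + 1) div 2"

lemma mag_Suc: "mag n (Suc k) = mag n k + 2"
  unfolding mag_def by simp

lemma mag_reflect: "k \<le> n \<Longrightarrow> mag n (n - k) = - mag n k"
  unfolding mag_def by (simp add: of_nat_diff)

lemma mag_mid_level: "mag n (mid_level n) = 0 \<or> mag n (mid_level n) = 1"
proof -
  have "2 * ((n + 1) div 2) = n \<or> 2 * ((n + 1) div 2) = n + 1" by presburger
  thus ?thesis unfolding mag_def mid_level_def
    by (metis add_diff_cancel_left' diff_self of_nat_1 of_nat_add of_nat_mult of_nat_numeral)
qed

lemma mag_mid_level_add: "mag n (mid_level n + i) = mag n (mid_level n) + 2 * real i"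
  unfolding mag_def by simp

lemma log_corr_reflect: "k \<le> n \<Longrightarrow> log_corr n (n - k) = log_corr n k"
  unfolding log_corr_def by (simp add: mag_reflect binomial_symmetric[symmetric])

lemma log_corr_Suc: "k < n \<Longrightarrow> log_corr n (Suc k) = log_corr n k + log_corr_incr n k"
proof -
  assume k: "k < n"
  have "Suc k * (n choose Suc k) = (n - k) * (n choose k)"
    using binomial_absorption[of k n] binomial_absorb_comp[of n k] by simp
  hence "real (n choose Suc k) = real (n - k) * real (n choose k) / (real k + 1)"
    by (simp add: field_simps flip: of_nat_mult)
  moreover have "real (n choose k) > 0" "real (n - k) > 0" using k by auto
  ultimately have "ln (real (n choose Suc k)) = ln (real (n - k)) + ln (real (n choose k)) - ln (real k + 1)"
    by (simp add: ln_div ln_mult)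
  thus ?thesis unfolding log_corr_def log_corr_incr_def mag_Suc
    by (simp add: algebra_simps diff_divide_distrib add_divide_distrib)
qed

lemma log_corr_telescope:
  "mid_level n + J \<le> n \<Longrightarrow> log_corr n (mid_level n + J) - log_corr n (mid_level n)
     = (\<Sum>i<J. log_corr_incr n (mid_level n + i))"
  by (induction J) (auto simp: log_corr_Suc)

lemma log_corr_incr_eq:
  assumes "k < n"
  defines "v \<equiv> mag n k + 1"
  shows "log_corr_incr n k = ln (1 - v / (real n + 1)) - ln (1 + v / (real n + 1))
          + 2 * (v / n) + 2/3 * (v / n)^3 + 2/3 * (v / n) / (real n)^2"
proof -
  have n0: "real n > 0" using assms by simp
  have a: "real (n - k) > 0" "real k + 1 > 0" "real n + 1 > 0" "real n - real k > 0" using assms by auto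
  have e1: "1 - v / (real n + 1) = 2 * real (n - k) / (real n + 1)"
    unfolding v_def mag_def using assms by (simp add: field_simps of_nat_diff)
  have e2: "1 + v / (real n + 1) = 2 * (real k + 1) / (real n + 1)"
    unfolding v_def mag_def by (simp add: field_simps)
  have "ln (1 - v / (real n + 1)) - ln (1 + v / (real n + 1)) = ln (real (n - k)) - ln (real k + 1)"
  proof -
    have "ln (2 * real (n - k) / (real n + 1)) = ln 2 + ln (real (n - k)) - ln (real n + 1)"
      using a ln_div[of "2 * real (n - k)" "real n + 1"] ln_mult[of 2 "real (n - k)"] by simp
    moreover have "ln (2 * (real k + 1) / (real n + 1)) = ln 2 + ln (real k + 1) - ln (real n + 1)"
      using a ln_div[of "2 * (real k + 1)" "real n + 1"] ln_mult[of 2 "real k + 1"] by simp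
    ultimately show ?thesis unfolding e1 e2 by linarith
  qed
  moreover have "((mag n k + 2)^2 - (mag n k)^2) / (2 * real n) + ((mag n k + 2)^4 - (mag n k)^4) / (12 * real n^3)
     = 2 * (v / n) + 2/3 * (v / n)^3 + 2/3 * (v / n) / (real n)^2"
  proof -
    have m: "mag n k = v - 1" unfolding v_def by simp
    show ?thesis unfolding m using n0 by (simp add: field_simps) algebra
  qed
  ultimately show ?thesis unfolding log_corr_incr_def by linarith
qed

lemma log_corr_incr_le:
  assumes "k < n" "0 \<le> mag n k + 1"
  shows "log_corr_incr n k \<le> 5 * ((mag n k + 1) / n) / n"
proof -
  define v where "v = mag n k + 1"
  define u where "u = v / n"
  define t where "t = v / (real n + 1)"
  have n1: "real n \<ge> 1" using assms by simp
  have v0: "0 \<le> v" "v \<le> real n - 1" using assms unfolding v_def mag_def by auto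
  have u0: "0 \<le> u" "u \<le> 1" unfolding u_def using v0 n1 by (auto simp: field_simps)
  have t0: "0 \<le> t" "t < 1" unfolding t_def using v0 n1 by (auto simp: field_simps)
  have tu: "t \<le> u" unfolding t_def u_def using v0 n1 by (intro divide_left_mono) auto
  have q: "u - t \<le> u / n"
  proof -
    have "u - t = u / (real n + 1)" unfolding u_def t_def using n1 by (simp add: field_simps)
    also have "\<dots> \<le> u / n" using u0 n1 by (intro divide_left_mono) auto
    finally show ?thesis .
  qed
  have c3: "u^3 - t^3 \<le> 3 * (u - t)"
  proof -
    have "u^3 - t^3 = (u - t) * (u^2 + u*t + t^2)" by (simp add: power2_eq_square power3_eq_cube algebra_simps)
    also have "\<dots> \<le> (u - t) * 3"
    proof (rule mult_left_mono)
      have "u^2 \<le> 1" "u * t \<le> 1" "t^2 \<le> 1" using u0 t0 tu by (auto simp: power_le_one mult_le_one)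
      thus "u^2 + u*t + t^2 \<le> 3" by linarith
    qed (use tu in auto)
    finally show ?thesis by simp
  qed
  have r: "2/3 * u / (real n)^2 \<le> u / n"
  proof -
    have "2/3 * u / (real n)^2 = 2/3 * (u / (real n)^2)" by simp
    moreover have "0 \<le> u / (real n)^2" using u0 by simp
    ultimately have "2/3 * u / (real n)^2 \<le> u / (real n)^2" by linarith
    also have "\<dots> \<le> u / n" using u0 n1 by (intro divide_left_mono) (auto simp: power2_eq_square)
    finally show ?thesis .
  qed
  have "log_corr_incr n k = ln (1 - t) - ln (1 + t) + 2 * u + 2/3 * u^3 + 2/3 * u / (real n)^2"
    using log_corr_incr_eq[OF assms(1)] unfolding u_def t_def v_def by simp
  also have "\<dots> \<le> 5 * (u / n)"
    using ln_ratio_le[OF t0] r q c3 by argo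
  finally show ?thesis unfolding u_def v_def by simp
qed

lemma log_corr_incr_ge:
  assumes "k < n" "0 \<le> mag n k + 1" "(mag n k + 1) / n \<le> 1/2"
  shows "- 8/15 * ((mag n k + 1) / n)^5 \<le> log_corr_incr n k"
proof -
  define v where "v = mag n k + 1"
  define u where "u = v / n"
  define t where "t = v / (real n + 1)"
  have n1: "real n \<ge> 1" using assms by simp
  have v0: "0 \<le> v" using assms v_def by simp
  have u0: "0 \<le> u" "u \<le> 1/2" unfolding u_def using v0 n1 assms(3) v_def by auto
  have t0: "0 \<le> t" unfolding t_def using v0 n1 by auto
  have tu: "t \<le> u" unfolding t_def u_def using v0 n1 by (intro divide_left_mono) auto
  have p: "t^3 \<le> u^3" "t^5 \<le> u^5" using t0 tu by (auto intro: power_mono)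
  have "log_corr_incr n k = ln (1 - t) - ln (1 + t) + 2 * u + 2/3 * u^3 + 2/3 * u / (real n)^2"
    using log_corr_incr_eq[OF assms(1)] unfolding u_def t_def v_def by simp
  also have "\<dots> \<ge> - 8/15 * u^5"
  proof -
    have "- 2 * t - 2/3 * t^3 - 8/15 * t^5 \<le> ln (1 - t) - ln (1 + t)" using ln_ratio_ge t0 tu u0 by auto
    moreover have "0 \<le> 2/3 * u / (real n)^2" using u0 by simp
    ultimately show ?thesis using p tu by linarith
  qed
  finally show ?thesis unfolding u_def v_def by simp
qed

lemma sum_arith_le_square:
  "0 \<le> (e::real) \<Longrightarrow> (\<Sum>i<J. e + 2 * real i + 1) \<le> (e + 2 * real J)^2 / 4"
proof (induction J)
  case (Suc J)
  hence "(\<Sum>i<Suc J. e + 2 * real i + 1) \<le> (e + 2 * real J)^2 / 4 + (e + 2 * real J + 1)" by simp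
  also have "\<dots> \<le> (e + 2 * real (Suc J))^2 / 4" by (simp add: power2_eq_square field_simps)
  finally show ?case .
qed simp

lemma sum_arith_pow5_le:
  "0 \<le> (e::real) \<Longrightarrow> (\<Sum>i<J. (e + 2 * real i + 1)^5) \<le> (e + 2 * real J)^6 / 6"
proof (induction J)
  case (Suc J)
  define z where "z = e + 2 * real J"
  have z: "0 \<le> z" using Suc.prems unfolding z_def by simp
  have "(\<Sum>i<Suc J. (e + 2 * real i + 1)^5) \<le> z^6 / 6 + (z + 1)^5"
    using Suc unfolding z_def by simp
  also have "\<dots> \<le> (z + 2)^6 / 6"
  proof -
    have "(z + 2)^6 - z^6 - 6 * (z + 1)^5 = 6*z^5 + 30*z^4 + 100*z^3 + 180*z^2 + 162*z + 58"
      by (simp add: power2_eq_square power3_eq_cube power4_eq_xxxx algebra_simps eval_nat_numeral)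
    moreover have "0 \<le> 6*z^5 + 30*z^4 + 100*z^3 + 180*z^2 + 162*z + 58" using z by simp
    ultimately show ?thesis by simp
  qed
  finally show ?case unfolding z_def by (simp add: algebra_simps)
qed simp

lemma log_corr_diff_le_right:
  assumes "mid_level n \<le> k" "k \<le> n"
  shows "log_corr n k - log_corr n (mid_level n) \<le> 5/4 * (mag n k)^2 / (real n)^2"
proof -
  define J where "J = k - mid_level n"
  define e where "e = mag n (mid_level n)"
  have k: "k = mid_level n + J" using assms J_def by simp
  have e0: "0 \<le> e" using mag_mid_level[of n] e_def by auto
  have "log_corr n k - log_corr n (mid_level n) = (\<Sum>i<J. log_corr_incr n (mid_level n + i))"
    using log_corr_telescope assms k by simp
  also have "\<dots> \<le> (\<Sum>i<J. 5 / (real n)^2 * (e + 2 * real i + 1))"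
  proof (rule sum_mono)
    fix i assume "i \<in> {..<J}"
    hence lt: "mid_level n + i < n" using k assms by simp
    have "log_corr_incr n (mid_level n + i) \<le> 5 * ((mag n (mid_level n + i) + 1) / n) / n"
      by (rule log_corr_incr_le[OF lt]) (use mag_mid_level_add[of n i] e0 e_def in simp)
    thus "log_corr_incr n (mid_level n + i) \<le> 5 / (real n)^2 * (e + 2 * real i + 1)"
      using mag_mid_level_add[of n i] unfolding e_def by (simp add: power2_eq_square)
  qed
  also have "\<dots> = 5 / (real n)^2 * (\<Sum>i<J. e + 2 * real i + 1)" by (simp add: sum_distrib_left)
  also have "\<dots> \<le> 5 / (real n)^2 * ((e + 2 * real J)^2 / 4)"
    by (intro mult_left_mono sum_arith_le_square e0) auto
  also have "e + 2 * real J = mag n k" unfolding k e_def by (simp add: mag_mid_level_add)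
  finally show ?thesis by simp
qed

lemma log_corr_diff_ge_right:
  assumes "mid_level n \<le> k" "k \<le> n" "mag n k \<le> real n / 2"
  shows "- 4/45 * (mag n k)^6 / (real n)^5 \<le> log_corr n k - log_corr n (mid_level n)"
proof -
  define J where "J = k - mid_level n"
  define e where "e = mag n (mid_level n)"
  have k: "k = mid_level n + J" using assms J_def by simp
  have e0: "0 \<le> e" using mag_mid_level[of n] e_def by auto
  have ek: "e + 2 * real J = mag n k" unfolding k e_def by (simp add: mag_mid_level_add)
  have "- 4/45 * (mag n k)^6 / (real n)^5 = - 8/15 / (real n)^5 * ((e + 2 * real J)^6 / 6)"
    unfolding ek by simp
  also have "\<dots> \<le> - 8/15 / (real n)^5 * (\<Sum>i<J. (e + 2 * real i + 1)^5)"
    by (intro mult_left_mono_neg sum_arith_pow5_le e0) auto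
  also have "\<dots> = (\<Sum>i<J. - 8/15 * ((e + 2 * real i + 1) / n)^5)"
    by (simp add: sum_distrib_left power_divide)
  also have "\<dots> \<le> (\<Sum>i<J. log_corr_incr n (mid_level n + i))"
  proof (rule sum_mono)
    fix i assume "i \<in> {..<J}"
    hence lt: "mid_level n + i < n" and iJ: "i < J" using k assms by auto
    have m: "mag n (mid_level n + i) + 1 = e + 2 * real i + 1" using mag_mid_level_add[of n i] e_def by simp
    have "(e + 2 * real i + 1) / n \<le> 1/2"
      using iJ ek assms(3) lt by (simp add: field_simps)
    thus "- 8/15 * ((e + 2 * real i + 1) / n)^5 \<le> log_corr_incr n (mid_level n + i)"
      using log_corr_incr_ge[OF lt] e0 unfolding m by simp
  qed
  also have "\<dots> = log_corr n k - log_corr n (mid_level n)" using log_corr_telescope assms k by simp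
  finally show ?thesis .
qed

lemma log_corr_diff_le:
  assumes "k \<le> n"
  shows "log_corr n k - log_corr n (mid_level n) \<le> 5/4 * (mag n k)^2 / (real n)^2"
proof (cases "mid_level n \<le> k")
  case False
  hence "mid_level n \<le> n - k" unfolding mid_level_def by auto
  from log_corr_diff_le_right[OF this] show ?thesis
    using log_corr_reflect[OF assms] mag_reflect[OF assms] by simp
qed (use log_corr_diff_le_right assms in blast)

lemma abs_log_corr_diff_le:
  assumes "k \<le> n" "\<bar>mag n k\<bar> \<le> real n / 2"
  shows "\<bar>log_corr n k - log_corr n (mid_level n)\<bar> \<le> 5/4 * (mag n k)^2 / (real n)^2 + 4/45 * (mag n k)^6 / (real n)^5"
proof -
  have "- 4/45 * (mag n k)^6 / (real n)^5 \<le> log_corr n k - log_corr n (mid_level n)"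
  proof (cases "mid_level n \<le> k")
    case False
    hence "mid_level n \<le> n - k" unfolding mid_level_def by auto
    from log_corr_diff_ge_right[OF this] show ?thesis
      using log_corr_reflect[OF assms(1)] mag_reflect[OF assms(1)] assms(2) by simp
  qed (use log_corr_diff_ge_right assms in auto)
  moreover have "0 \<le> 5/4 * (mag n k)^2 / (real n)^2" "0 \<le> 4/45 * (mag n k)^6 / (real n)^5"
    by (auto simp: zero_le_even_power)
  ultimately show ?thesis using log_corr_diff_le[OF assms(1)] unfolding abs_le_iff by linarith
qed

section \<open>From configurations to levels\<close>

lemma sum_Pow_card:
  fixes G :: "nat \<Rightarrow> real"
  assumes "finite A"
  shows "(\<Sum>S\<in>Pow A. G (card S)) = (\<Sum>k\<le>card A. real (card A choose k) * G k)"
proof -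
  have "(\<Sum>S\<in>Pow A. G (card S)) = (\<Sum>k\<le>card A. \<Sum>S\<in>{S. S \<in> Pow A \<and> card S = k}. G (card S))"
    by (rule sum.group[symmetric]) (use assms in \<open>auto intro: card_mono\<close>)
  also have "\<dots> = (\<Sum>k\<le>card A. real (card A choose k) * G k)"
  proof (rule sum.cong[OF refl])
    fix k
    have "(\<Sum>S\<in>{S. S \<in> Pow A \<and> card S = k}. G (card S)) = (\<Sum>S\<in>{S. S \<subseteq> A \<and> card S = k}. G k)"
      by (rule sum.cong) auto
    also have "\<dots> = real (card A choose k) * G k" using n_subsets[OF assms] by simp
    finally show "(\<Sum>S\<in>{S. S \<in> Pow A \<and> card S = k}. G (card S)) = real (card A choose k) * G k" .
  qed
  finally show ?thesis .
qed

definition up_spins :: "nat \<Rightarrow> (nat \<Rightarrow> int) \<Rightarrow> nat set" where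
  "up_spins n \<sigma> = {i \<in> {1..n}. \<sigma> i = 1}"

lemma bij_betw_up_spins: "bij_betw (up_spins n) (cw_configs n) (Pow {1..n})"
proof (rule bij_betwI[where g = "\<lambda>S. restrict (\<lambda>i. if i \<in> S then 1 else -1) {1..n}"])
  show "up_spins n \<in> cw_configs n \<rightarrow> Pow {1..n}" unfolding up_spins_def by auto
  show "(\<lambda>S. restrict (\<lambda>i. if i \<in> S then 1 else -1) {1..n}) \<in> Pow {1..n} \<rightarrow> cw_configs n"
    unfolding cw_configs_def by auto
  fix \<sigma> assume s: "\<sigma> \<in> cw_configs n"
  show "restrict (\<lambda>i. if i \<in> up_spins n \<sigma> then 1 else -1) {1..n} = \<sigma>"
  proof
    fix i show "restrict (\<lambda>i. if i \<in> up_spins n \<sigma> then 1 else -1) {1..n} i = \<sigma> i"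
      using s unfolding cw_configs_def up_spins_def PiE_def extensional_def Pi_def
      by (cases "i \<in> {1..n}") auto
  qed
next
  fix S assume "S \<in> Pow {1..n}"
  thus "up_spins n (restrict (\<lambda>i. if i \<in> S then 1 else -1) {1..n}) = S"
    unfolding up_spins_def by auto
qed

lemma magnetization_eq_mag:
  assumes "\<sigma> \<in> cw_configs n"
  shows "magnetization n \<sigma> = mag n (card (up_spins n \<sigma>))"
proof -
  let ?S = "up_spins n \<sigma>"
  have sub: "?S \<subseteq> {1..n}" unfolding up_spins_def by auto
  hence card_S: "card ?S \<le> n" using card_mono[of "{1..n}" ?S] by simp
  have "(\<Sum>i\<in>{1..n}. \<sigma> i) = (\<Sum>i\<in>{1..n}. if i \<in> ?S then 1 else -1)"
    by (rule sum.cong) (use assms in \<open>auto simp: cw_configs_def up_spins_def\<close>)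
  also have "\<dots> = (\<Sum>i\<in>{1..n} \<inter> {x. x \<in> ?S}. 1) + (\<Sum>i\<in>{1..n} \<inter> - {x. x \<in> ?S}. -1)"
    by (rule sum.If_cases) simp
  also have "{1..n} \<inter> {x. x \<in> ?S} = ?S" using sub by auto
  also have "{1..n} \<inter> - {x. x \<in> ?S} = {1..n} - ?S" by auto
  also have "(\<Sum>i\<in>?S. (1::int)) + (\<Sum>i\<in>{1..n} - ?S. -1) = int (card ?S) - int (card ({1..n} - ?S))"
    by simp
  also have "card ({1..n} - ?S) = n - card ?S" using sub by (simp add: card_Diff_subset finite_subset)
  finally show ?thesis unfolding magnetization_def mag_def using card_S by (simp add: of_nat_diff)
qed

lemma sum_cw_configs:
  fixes F :: "real \<Rightarrow> real"
  shows "(\<Sum>\<sigma>\<in>cw_configs n. F (magnetization n \<sigma>)) = (\<Sum>k\<le>n. real (n choose k) * F (mag n k))"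
proof -
  have "(\<Sum>\<sigma>\<in>cw_configs n. F (magnetization n \<sigma>)) = (\<Sum>\<sigma>\<in>cw_configs n. F (mag n (card (up_spins n \<sigma>))))"
    by (rule sum.cong) (auto simp: magnetization_eq_mag)
  also have "\<dots> = (\<Sum>S\<in>Pow {1..n}. F (mag n (card S)))"
    by (rule sum.reindex_bij_betw[OF bij_betw_up_spins])
  also have "\<dots> = (\<Sum>k\<le>n. real (n choose k) * F (mag n k))"
    using sum_Pow_card[of "{1..n}" "\<lambda>k. F (mag n k)"] by simp
  finally show ?thesis .
qed

definition level_weight :: "nat \<Rightarrow> nat \<Rightarrow> real" where
  "level_weight n k = real (n choose k) * exp ((mag n k)^2 / (2 * real n))"

lemma cw_prob_eq_level_sums:
  "cw_prob n (\<lambda>\<sigma>. magnetization n \<sigma> / real n powr (3/4) \<le> a)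
   = (\<Sum>k\<le>n. if mag n k / real n powr (3/4) \<le> a then level_weight n k else 0) / (\<Sum>k\<le>n. level_weight n k)"
proof -
  have fin: "finite (cw_configs n)" unfolding cw_configs_def by (simp add: finite_PiE)
  have num: "(\<Sum>\<sigma>\<in>{\<sigma>\<in>cw_configs n. magnetization n \<sigma> / real n powr (3/4) \<le> a}. cw_weight n \<sigma>)
      = (\<Sum>\<sigma>\<in>cw_configs n. (\<lambda>M. if M / real n powr (3/4) \<le> a then exp (M^2 / (2 * real n)) else 0) (magnetization n \<sigma>))"
    using fin by (simp add: sum.inter_filter[symmetric] cw_weight_def)
  have den: "(\<Sum>\<sigma>\<in>cw_configs n. cw_weight n \<sigma>)
      = (\<Sum>\<sigma>\<in>cw_configs n. (\<lambda>M. exp (M^2 / (2 * real n))) (magnetization n \<sigma>))"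
    by (simp add: cw_weight_def)
  show ?thesis unfolding cw_prob_def num den level_weight_def
    unfolding sum_cw_configs[of "\<lambda>M. if M / real n powr (3/4) \<le> a then exp (M^2 / (2 * real n)) else 0" n]
      sum_cw_configs[of "\<lambda>M. exp (M^2 / (2 * real n))" n]
    by (intro arg_cong2[where f="(/)"] sum.cong) auto
qed

lemma lipschitz_of_deriv_bound:
  fixes \<phi> \<phi>' :: "real \<Rightarrow> real"
  assumes der: "\<And>x. x \<in> {a..b} \<Longrightarrow> (\<phi> has_real_derivative \<phi>' x) (at x)"
    and bd: "\<And>x. x \<in> {a..b} \<Longrightarrow> \<bar>\<phi>' x\<bar> \<le> B"
    and xy: "x \<in> {a..b}" "y \<in> {a..b}"
  shows "\<bar>\<phi> y - \<phi> x\<bar> \<le> B * \<bar>y - x\<bar>"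
proof -
  have main: "\<bar>\<phi> q - \<phi> p\<bar> \<le> B * (q - p)" if pq: "p < q" "p \<in> {a..b}" "q \<in> {a..b}" for p q
  proof -
    have "\<exists>z. p < z \<and> z < q \<and> \<phi> q - \<phi> p = (q - p) * \<phi>' z"
      by (rule MVT2[OF pq(1)]) (use der pq in auto)
    then obtain z where z: "p < z" "z < q" "\<phi> q - \<phi> p = (q - p) * \<phi>' z" by blast
    have "\<bar>\<phi>' z\<bar> \<le> B" using z pq by (intro bd) auto
    thus ?thesis using z pq by (simp add: abs_mult mult_right_mono mult.commute)
  qed
  consider "x < y" | "x = y" | "y < x" by linarith
  thus ?thesis
    by cases (use main[OF _ xy] main[OF _ xy(2,1)] in \<open>auto simp: abs_minus_commute\<close>)
qed

lemma dens_deriv: "(dens has_real_derivative (- (x^3 / 3) * dens x)) (at x)"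
  unfolding dens_def by (rule derivative_eq_intros refl | simp)+

lemma abs_dens_deriv_le: "\<bar>- (x^3 / 3) * dens x\<bar> \<le> 3"
proof (cases "\<bar>x\<bar> \<le> 2")
  case True
  have "\<bar>x\<bar>^3 \<le> 2^3" using True by (intro power_mono) auto
  hence "\<bar>x\<bar>^3 * dens x \<le> 8 * 1" using dens_pos[of x] dens_le_1[of x] by (intro mult_mono) auto
  thus ?thesis using dens_pos[of x] by (simp add: abs_mult power_abs)
next
  case False
  have "x^4 / 12 \<le> exp (x^4 / 12)" using exp_ge_add_one_self[of "x^4/12"] by linarith
  hence "dens x * (x^4 / 12) \<le> dens x * exp (x^4 / 12)" using dens_pos[of x] by (intro mult_left_mono) auto
  also have "dens x * exp (x^4 / 12) = 1" unfolding dens_def by (simp flip: exp_add)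
  finally have "\<bar>x\<bar>^3 * dens x * \<bar>x\<bar> \<le> 12"
    by (simp add: power_even_abs eval_nat_numeral mult_ac)
  moreover have "\<bar>x\<bar>^3 * dens x * 2 \<le> \<bar>x\<bar>^3 * dens x * \<bar>x\<bar>"
    using False dens_pos[of x] by (intro mult_left_mono) auto
  ultimately have "\<bar>x\<bar>^3 * dens x \<le> 6" by linarith
  thus ?thesis using dens_pos[of x] by (simp add: abs_mult power_abs)
qed

lemma dens_lipschitz: "\<bar>dens y - dens x\<bar> \<le> 3 * \<bar>y - x\<bar>"
  using lipschitz_of_deriv_bound[where \<phi>=dens and \<phi>'="\<lambda>x. - (x^3 / 3) * dens x"
      and a="min x y" and b="max x y" and B=3 and x=x and y=y]
    dens_deriv abs_dens_deriv_le by auto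

text \<open>\<open>n\<^sup>-\<^sup>1\<^sup>/\<^sup>2 err_profile x\<close> bounds the error of the corrected log-weight at the node \<open>x\<close>.\<close>
definition err_profile :: "real \<Rightarrow> real" where "err_profile x = 5/4 * x^2 + 4/45 * x^6"

lemma err_profile_nonneg: "0 \<le> err_profile x"
  unfolding err_profile_def by (simp add: zero_le_even_power)

lemma err_profile_mono: "\<bar>x\<bar> \<le> \<rho> \<Longrightarrow> err_profile x \<le> err_profile \<rho>"
proof -
  assume "\<bar>x\<bar> \<le> \<rho>"
  hence "\<bar>x\<bar>^2 \<le> \<rho>^2" "\<bar>x\<bar>^6 \<le> \<rho>^6" using power_mono[of "\<bar>x\<bar>" \<rho> 2] power_mono[of "\<bar>x\<bar>" \<rho> 6] by auto
  hence "x^2 \<le> \<rho>^2" "x^6 \<le> \<rho>^6" by (simp_all add: power_even_abs)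
  thus ?thesis unfolding err_profile_def by simp
qed

lemma continuous_on_dens_err_profile: "continuous_on S (\<lambda>x. dens x * err_profile x)"
  unfolding dens_def err_profile_def by (intro continuous_intros) auto

lemma dens_err_profile_deriv:
  "((\<lambda>x. dens x * err_profile x) has_real_derivative
     (dens x * (5/2 * x + 8/15 * x^5) - (x^3 / 3) * dens x * err_profile x)) (at x)"
proof -
  have "(err_profile has_real_derivative (5/2 * x + 8/15 * x^5)) (at x)"
    unfolding err_profile_def by (rule derivative_eq_intros refl | simp)+
  from DERIV_mult[OF dens_deriv this] show ?thesis by (simp add: algebra_simps)
qed

lemma abs_dens_err_profile_deriv_le:
  assumes "\<bar>x\<bar> \<le> \<rho>" "1 \<le> \<rho>"
  shows "\<bar>dens x * (5/2 * x + 8/15 * x^5) - (x^3 / 3) * dens x * err_profile x\<bar> \<le> 4 * \<rho>^9"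
proof -
  have p: "\<bar>x\<bar>^k \<le> \<rho>^9" if "k \<le> 9" for k
  proof -
    have "\<bar>x\<bar>^k \<le> \<rho>^k" using assms by (intro power_mono) auto
    also have "\<rho>^k \<le> \<rho>^9" using assms that by (intro power_increasing) auto
    finally show ?thesis .
  qed
  have "\<bar>5/2 * x + 8/15 * x^5\<bar> \<le> 5/2 * \<bar>x\<bar> + 8/15 * \<bar>x\<bar>^5"
    using abs_triangle_ineq[of "5/2 * x" "8/15 * x^5"] by (simp add: abs_mult power_abs)
  hence a1: "\<bar>5/2 * x + 8/15 * x^5\<bar> \<le> 5/2 * \<rho>^9 + 8/15 * \<rho>^9" using p[of 1] p[of 5] by simp
  have "x^3 / 3 * err_profile x = 5/12 * x^5 + 4/135 * x^9"
    unfolding err_profile_def by (simp add: field_simps flip: power_add)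
  hence "\<bar>x^3 / 3 * err_profile x\<bar> \<le> 5/12 * \<bar>x\<bar>^5 + 4/135 * \<bar>x\<bar>^9"
    using abs_triangle_ineq[of "5/12 * x^5" "4/135 * x^9"] by (simp add: abs_mult power_abs)
  hence a2: "\<bar>x^3 / 3 * err_profile x\<bar> \<le> 5/12 * \<rho>^9 + 4/135 * \<rho>^9" using p[of 5] p[of 9] by simp
  have "dens x * (5/2 * x + 8/15 * x^5) - (x^3 / 3) * dens x * err_profile x
      = dens x * ((5/2 * x + 8/15 * x^5) - x^3 / 3 * err_profile x)" by (simp add: algebra_simps)
  hence "\<bar>dens x * (5/2 * x + 8/15 * x^5) - (x^3 / 3) * dens x * err_profile x\<bar>
      = dens x * \<bar>(5/2 * x + 8/15 * x^5) - x^3 / 3 * err_profile x\<bar>"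
    using dens_pos[of x] by (simp add: abs_mult)
  also have "\<dots> \<le> 1 * (\<bar>5/2 * x + 8/15 * x^5\<bar> + \<bar>x^3 / 3 * err_profile x\<bar>)"
    using dens_pos[of x] dens_le_1[of x] by (intro mult_mono abs_triangle_ineq4) auto
  also have "\<dots> \<le> 4 * \<rho>^9" using a1 a2 by argo
  finally show ?thesis .
qed

lemma dens_err_profile_lipschitz:
  assumes "\<bar>x\<bar> \<le> \<rho>" "\<bar>y\<bar> \<le> \<rho>" "1 \<le> \<rho>"
  shows "\<bar>dens y * err_profile y - dens x * err_profile x\<bar> \<le> 4 * \<rho>^9 * \<bar>y - x\<bar>"
  by (rule lipschitz_of_deriv_bound[where a="-\<rho>" and b=\<rho>, OF dens_err_profile_deriv])
     (use assms abs_dens_err_profile_deriv_le in \<open>auto simp: abs_le_iff\<close>)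

text \<open>
  \<open>H x = 123/80 x dens x + 4/15 x\<^sup>3 dens x\<close> satisfies
  \<open>287/80 dens - H' - dens err_profile = 41/20 dens (1 - x\<^sup>2/2)\<^sup>2 \<ge> 0\<close>, and \<open>H\<close> is odd and
  nonnegative on \<open>[0,\<infinity>)\<close>.
\<close>
lemma integral_dens_err_profile_le:
  assumes "0 \<le> T"
  shows "integral {-T..T} (\<lambda>x. dens x * err_profile x) \<le> 287/80 * integral {-T..T} dens"
proof -
  define H where "H x = 123/80 * (x * dens x) + 4/15 * (x^3 * dens x)" for x
  define H' where "H' x = 123/80 * (dens x + x * (-(x^3/3) * dens x))
    + 4/15 * (3 * x^2 * dens x + x^3 * (-(x^3/3) * dens x))" for x
  have dH: "(H has_real_derivative H' x) (at x)" for x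
    unfolding H_def H'_def
    by (rule derivative_eq_intros dens_deriv refl | simp add: algebra_simps)+
  have ftc: "(H' has_integral (H T - H (-T))) {-T..T}"
    using assms dH
    by (intro fundamental_theorem_of_calculus)
       (auto simp: has_real_derivative_iff_has_vector_derivative intro: has_vector_derivative_at_within)
  have HT: "0 \<le> H T - H (-T)" unfolding H_def using assms dens_pos[of T] by (simp add: dens_minus)
  have pw: "dens x * err_profile x \<le> 287/80 * dens x - H' x" for x
  proof -
    have "287/80 * dens x - H' x - dens x * err_profile x = 41/20 * dens x * (1 - x^2 / 2)^2"
      unfolding H'_def err_profile_def by algebra
    moreover have "0 \<le> 41/20 * dens x * (1 - x^2 / 2)^2" using dens_pos[of x] by simp
    ultimately show ?thesis by linarith
  qed
  have iF: "(\<lambda>x. 287/80 * dens x) integrable_on {-T..T}"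
    using integrable_on_cmult_left[OF dens_integrable_on] by simp
  have iH: "H' integrable_on {-T..T}" using ftc by (rule has_integral_integrable)
  have "integral {-T..T} (\<lambda>x. dens x * err_profile x) \<le> integral {-T..T} (\<lambda>x. 287/80 * dens x - H' x)"
    by (rule Henstock_Kurzweil_Integration.integral_le[OF
          integrable_continuous_interval[OF continuous_on_dens_err_profile] integrable_diff[OF iF iH] pw])
  also have "\<dots> = 287/80 * integral {-T..T} dens - (H T - H (-T))"
    using integral_diff[OF iF iH] integral_unique[OF ftc] by simp
  finally show ?thesis using HT by simp
qed

lemma midpoint_integral_err:
  fixes \<phi> :: "real \<Rightarrow> real"
  assumes "0 \<le> h" "\<phi> integrable_on {a..a+h}" "\<And>y. y \<in> {a..a+h} \<Longrightarrow> \<bar>\<phi> y - \<phi> (a + h/2)\<bar> \<le> \<eta>"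
  shows "\<bar>h * \<phi> (a + h/2) - integral {a..a+h} \<phi>\<bar> \<le> h * \<eta>"
proof -
  have b: "\<phi> (a + h/2) - \<eta> \<le> \<phi> y \<and> \<phi> y \<le> \<phi> (a + h/2) + \<eta>" if "y \<in> {a..a+h}" for y
    using assms(3)[OF that] by (simp add: abs_le_iff)
  have "integral {a..a+h} \<phi> \<le> integral {a..a+h} (\<lambda>y. \<phi> (a + h/2) + \<eta>)"
    by (rule Henstock_Kurzweil_Integration.integral_le) (use assms(2) b in auto)
  moreover have "integral {a..a+h} (\<lambda>y. \<phi> (a + h/2) - \<eta>) \<le> integral {a..a+h} \<phi>"
    by (rule Henstock_Kurzweil_Integration.integral_le) (use assms(2) b in auto)
  ultimately show ?thesis using assms(1) by (simp add: abs_le_iff algebra_simps)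
qed

lemma abs_exp_minus_1_le: "\<bar>exp x - 1\<bar> \<le> \<bar>x\<bar> * exp \<bar>x\<bar>" for x :: real
proof (cases "x \<ge> 0")
  case True
  have "exp x * (1 - x) \<le> exp x * exp (-x)" using exp_ge_add_one_self[of "-x"] by (intro mult_left_mono) auto
  thus ?thesis using True by (simp add: exp_minus field_simps)
next
  case False
  have "-x * 1 \<le> -x * exp (-x)" using False by (intro mult_left_mono) auto
  moreover have c: "\<bar>exp x - 1\<bar> = 1 - exp x" "\<bar>x\<bar> = -x" using False by auto
  ultimately show ?thesis unfolding c using exp_ge_add_one_self[of x] by linarith
qed

lemma exp_le_11_10: "\<bar>x\<bar> \<le> 1/20 \<Longrightarrow> exp \<bar>x\<bar> \<le> 11/10" for x :: real
  using exp_bound_lemma[of "\<bar>x\<bar>"] by simp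

lemma exp_5_4_le_8: "exp (5/4 :: real) \<le> 8"
proof -
  have "exp (1/2 :: real) ^ 3 \<le> 2^3" using exp_bound_half[of "1/2::real"] by (intro power_mono) auto
  moreover have "exp (1/2::real) ^ 3 = exp (3/2)" by (simp add: exp_of_nat_mult[symmetric])
  ultimately have "exp (3/2::real) \<le> 8" by simp
  moreover have "exp (5/4::real) \<le> exp (3/2)" by simp
  ultimately show ?thesis by linarith
qed

section \<open>The grid of rescaled magnetizations\<close>

text \<open>Node \<open>k\<close> is the rescaled magnetization \<open>mag n k / n\<^sup>3\<^sup>/\<^sup>4\<close>, the midpoint of the cell
  \<open>[cell_lo n k, cell_lo n k + mesh n]\<close>; consecutive cells tile \<open>[-(n+1)/n\<^sup>3\<^sup>/\<^sup>4, (n+1)/n\<^sup>3\<^sup>/\<^sup>4]\<close>.\<close>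
definition grid_scale :: "nat \<Rightarrow> real" where "grid_scale n = real n powr (3/4)"
definition mesh :: "nat \<Rightarrow> real" where "mesh n = 2 / grid_scale n"
definition node :: "nat \<Rightarrow> nat \<Rightarrow> real" where "node n k = mag n k / grid_scale n"
definition cell_lo :: "nat \<Rightarrow> nat \<Rightarrow> real" where "cell_lo n k = (mag n k - 1) / grid_scale n"

lemma grid_scale_pos: "n \<ge> 1 \<Longrightarrow> 0 < grid_scale n" unfolding grid_scale_def by simp
lemma mesh_pos: "n \<ge> 1 \<Longrightarrow> 0 < mesh n" unfolding mesh_def using grid_scale_pos by simp

lemma grid_scale_pow4: "n \<ge> 1 \<Longrightarrow> (grid_scale n)^4 = real n ^ 3"
proof -
  assume "n \<ge> 1"
  hence "(grid_scale n)^4 = real n powr (of_nat 4 * (3/4))" unfolding grid_scale_def by (subst powr_power) auto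
  also have "\<dots> = real n ^ 3" using \<open>n \<ge> 1\<close> by (simp add: powr_numeral)
  finally show ?thesis .
qed

lemma cell_lo_Suc: "n \<ge> 1 \<Longrightarrow> cell_lo n (Suc k) = cell_lo n k + mesh n"
  unfolding cell_lo_def mesh_def mag_def using grid_scale_pos[of n] by (simp add: field_simps)

lemma node_eq_cell_lo: "n \<ge> 1 \<Longrightarrow> node n k = cell_lo n k + mesh n / 2"
  unfolding cell_lo_def mesh_def node_def mag_def using grid_scale_pos[of n] by (simp add: field_simps)

lemma cell_lo_0: "cell_lo n 0 = - ((real n + 1) / grid_scale n)"
  unfolding cell_lo_def mag_def by (simp add: minus_divide_left)

lemma cell_lo_last: "cell_lo n (n + 1) = (real n + 1) / grid_scale n"
  unfolding cell_lo_def mag_def by simp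

lemma node_mono: "n \<ge> 1 \<Longrightarrow> k \<le> l \<Longrightarrow> node n k \<le> node n l"
  unfolding node_def mag_def using grid_scale_pos[of n] by (simp add: divide_right_mono)

lemma cell_bounds:
  assumes "n \<ge> 1" "k \<le> n" "y \<in> {cell_lo n k..cell_lo n k + mesh n}"
  shows "\<bar>y - node n k\<bar> \<le> mesh n / 2" "\<bar>y\<bar> \<le> (real n + 1) / grid_scale n"
proof -
  have y: "cell_lo n k \<le> y" "y \<le> cell_lo n k + mesh n" using assms(3) by auto
  show "\<bar>y - node n k\<bar> \<le> mesh n / 2" unfolding node_eq_cell_lo[OF assms(1)] abs_le_iff using y by linarith
  have c: "grid_scale n > 0" using grid_scale_pos assms by simp
  have "cell_lo n k + (real n + 1) / grid_scale n = 2 * real k / grid_scale n"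
    unfolding cell_lo_def mag_def using c by (simp add: field_simps)
  moreover have "0 \<le> 2 * real k / grid_scale n" using c by simp
  moreover have "cell_lo n k + mesh n \<le> (real n + 1) / grid_scale n"
    using assms c unfolding cell_lo_def mag_def mesh_def by (simp add: field_simps)
  ultimately show "\<bar>y\<bar> \<le> (real n + 1) / grid_scale n" unfolding abs_le_iff using y by linarith
qed

lemma card_mag_le:
  assumes "0 \<le> L"
  shows "real (card {k \<in> {..n}. \<bar>mag n k\<bar> \<le> L}) \<le> 2 * L + 1"
proof -
  define f where "f k = 2 * int k - int n" for k
  have inj: "inj_on f {k \<in> {..n}. \<bar>mag n k\<bar> \<le> L}" unfolding f_def inj_on_def by auto
  have "f ` {k \<in> {..n}. \<bar>mag n k\<bar> \<le> L} \<subseteq> {-\<lfloor>L\<rfloor>..\<lfloor>L\<rfloor>}"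
  proof
    fix z assume "z \<in> f ` {k \<in> {..n}. \<bar>mag n k\<bar> \<le> L}"
    then obtain k where k: "\<bar>mag n k\<bar> \<le> L" "z = f k" by auto
    have "mag n k = real_of_int z" unfolding k(2) f_def mag_def by simp
    hence "real_of_int z \<le> L" "real_of_int (-z) \<le> L" using k by (auto simp: abs_le_iff)
    hence "z \<le> \<lfloor>L\<rfloor>" "-z \<le> \<lfloor>L\<rfloor>" by (simp_all only: le_floor_iff)
    thus "z \<in> {-\<lfloor>L\<rfloor>..\<lfloor>L\<rfloor>}" by simp
  qed
  hence "card {k \<in> {..n}. \<bar>mag n k\<bar> \<le> L} \<le> card {-\<lfloor>L\<rfloor>..\<lfloor>L\<rfloor>}"
    by (intro card_inj_on_le[OF inj]) simp_all
  also have "\<dots> = nat (2 * \<lfloor>L\<rfloor> + 1)" by simp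
  finally have "real (card {k \<in> {..n}. \<bar>mag n k\<bar> \<le> L}) \<le> real (nat (2 * \<lfloor>L\<rfloor> + 1))" by linarith
  also have "\<dots> = 2 * real_of_int \<lfloor>L\<rfloor> + 1" using assms by simp
  finally show ?thesis by linarith
qed

lemma card_node_le:
  assumes "n \<ge> 1" "0 \<le> R"
  shows "real (card {k \<in> {..n}. \<bar>node n k\<bar> \<le> R}) \<le> 2 * R * grid_scale n + 1"
proof -
  have "{k \<in> {..n}. \<bar>node n k\<bar> \<le> R} = {k \<in> {..n}. \<bar>mag n k\<bar> \<le> R * grid_scale n}"
    unfolding node_def using grid_scale_pos[OF assms(1)] by (auto simp: abs_divide pos_divide_le_eq)
  thus ?thesis using card_mag_le[of "R * grid_scale n" n] assms grid_scale_pos[of n] by simp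
qed

lemma level_weight_eq:
  assumes "k \<le> n" "n \<ge> 1"
  shows "level_weight n k = exp (log_corr n k) * dens (node n k)"
proof -
  have "(node n k)^4 = (mag n k)^4 / real n ^ 3"
    unfolding node_def using grid_scale_pow4[OF assms(2)] by (simp add: power_divide)
  hence "log_corr n k + (- ((node n k)^4) / 12) = ln (real (n choose k)) + (mag n k)^2 / (2 * real n)"
    unfolding log_corr_def by simp
  hence "exp (log_corr n k) * dens (node n k) = exp (ln (real (n choose k))) * exp ((mag n k)^2 / (2 * real n))"
    unfolding dens_def by (simp flip: exp_add)
  thus ?thesis unfolding level_weight_def using assms by simp
qed

lemma down_closed_eq_lessThan:
  fixes K :: "nat set"
  assumes "finite K" "\<And>k l. k \<in> K \<Longrightarrow> l \<le> k \<Longrightarrow> l \<in> K"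
  shows "K = {..<card K}"
proof (cases "K = {}")
  case False
  define M where "M = Max K"
  have MK: "M \<in> K" using False assms M_def by simp
  have "K = {..M}"
  proof
    show "K \<subseteq> {..M}" using assms M_def by auto
    show "{..M} \<subseteq> K" using MK assms(2) by auto
  qed
  thus ?thesis by (simp add: lessThan_Suc_atMost[symmetric])
qed simp

definition nodes_below :: "nat \<Rightarrow> real \<Rightarrow> nat" where
  "nodes_below n a = card {k \<in> {..n}. node n k \<le> a}"

lemma nodes_below_eq: "n \<ge> 1 \<Longrightarrow> {k \<in> {..n}. node n k \<le> a} = {..<nodes_below n a}"
  unfolding nodes_below_def by (rule down_closed_eq_lessThan) (auto intro: order_trans[OF node_mono])

lemma nodes_below_le: "nodes_below n a \<le> n + 1"
  unfolding nodes_below_def using card_mono[of "{..n}" "{k \<in> {..n}. node n k \<le> a}"] by auto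

lemma node_le_of_less_nodes_below: "n \<ge> 1 \<Longrightarrow> k < nodes_below n a \<Longrightarrow> node n k \<le> a"
  using nodes_below_eq[of n a] by auto

lemma less_node_of_nodes_below_le: "n \<ge> 1 \<Longrightarrow> nodes_below n a \<le> k \<Longrightarrow> k \<le> n \<Longrightarrow> a < node n k"
  using nodes_below_eq[of n a] by (metis (mono_tags, lifting) atMost_iff lessThan_iff linorder_not_le mem_Collect_eq)

definition node_weight :: "nat \<Rightarrow> nat \<Rightarrow> real" where
  "node_weight n k = dens (node n k) * exp (log_corr n k - log_corr n (mid_level n))"

lemma node_weight_nonneg: "0 \<le> node_weight n k"
  unfolding node_weight_def using dens_pos by (simp add: less_imp_le)

lemma cw_prob_eq_node_weights:
  assumes "n \<ge> 1"
  shows "cw_prob n (\<lambda>\<sigma>. magnetization n \<sigma> / real n powr (3/4) \<le> a)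
       = (\<Sum>k<nodes_below n a. node_weight n k) / (\<Sum>k\<le>n. node_weight n k)"
proof -
  have w: "level_weight n k = exp (log_corr n (mid_level n)) * node_weight n k" if "k \<le> n" for k
    unfolding node_weight_def level_weight_eq[OF that assms] by (simp add: exp_diff)
  have "(\<Sum>k\<le>n. if node n k \<le> a then level_weight n k else 0) = (\<Sum>k\<in>{k \<in> {..n}. node n k \<le> a}. level_weight n k)"
    by (rule sum.inter_filter[symmetric]) simp
  hence "(\<Sum>k\<le>n. if node n k \<le> a then level_weight n k else 0) = (\<Sum>k<nodes_below n a. level_weight n k)"
    unfolding nodes_below_eq[OF assms] .
  moreover have "(\<Sum>k<nodes_below n a. level_weight n k) = exp (log_corr n (mid_level n)) * (\<Sum>k<nodes_below n a. node_weight n k)"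
    unfolding sum_distrib_left using nodes_below_le[of n a] by (intro sum.cong) (auto intro!: w)
  moreover have "(\<Sum>k\<le>n. level_weight n k) = exp (log_corr n (mid_level n)) * (\<Sum>k\<le>n. node_weight n k)"
    unfolding sum_distrib_left by (intro sum.cong) (auto intro!: w)
  ultimately show ?thesis unfolding cw_prob_eq_level_sums node_def grid_scale_def by simp
qed

section \<open>Midpoint Riemann sums over the grid\<close>

definition riemann_sum :: "nat \<Rightarrow> nat \<Rightarrow> real" where
  "riemann_sum n j = (\<Sum>k<j. mesh n * dens (node n k))"

definition riemann_err :: "nat \<Rightarrow> real \<Rightarrow> real" where
  "riemann_err n R = mesh n * (2 * mesh n * (2 * R * grid_scale n + 1) + exp (- ((R/2)^4) / 12) * (real n + 1))"

definition riemann_err_profile :: "nat \<Rightarrow> real \<Rightarrow> real" where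
  "riemann_err_profile n R = mesh n * (2 * (R+1)^9 * mesh n * (2 * R * grid_scale n + 1)
     + exp (- ((R/2)^4) / 12) * err_profile ((real n + 1) / grid_scale n) * (real n + 1))"

definition tail_err :: "nat \<Rightarrow> real" where "tail_err n = dens_sqrt_mass * exp (- real n / 24)"

lemma sum_if_le_card:
  fixes X Y :: real
  assumes "0 \<le> X" "0 \<le> Y"
  shows "(\<Sum>k\<le>n. if P k then X else Y) \<le> X * card {k \<in> {..n}. P k} + Y * (real n + 1)"
proof -
  have "(\<Sum>k\<le>n. if P k then X else Y) \<le> (\<Sum>k\<le>n. (if P k then X else 0) + Y)"
    by (rule sum_mono) (use assms in auto)
  also have "\<dots> = X * card {k \<in> {..n}. P k} + Y * (real n + 1)"
    by (simp add: sum.distrib sum.inter_filter[symmetric])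
  finally show ?thesis .
qed

lemma riemann_sum_approx:
  assumes n: "n \<ge> 1" and j: "j \<le> n + 1"
    and \<eta>: "\<And>k y. k \<le> n \<Longrightarrow> y \<in> {cell_lo n k..cell_lo n k + mesh n} \<Longrightarrow> \<bar>dens y - dens (node n k)\<bar> \<le> \<eta> k"
    and \<eta>_nonneg: "\<And>k. 0 \<le> \<eta> k"
  shows "\<bar>riemann_sum n j - (dens_cdf (cell_lo n j) - dens_cdf (cell_lo n 0))\<bar> \<le> (\<Sum>k\<le>n. mesh n * \<eta> k)"
proof -
  have h0: "0 \<le> mesh n" using mesh_pos[OF n] by simp
  have "dens_cdf (cell_lo n j) - dens_cdf (cell_lo n 0) = (\<Sum>k<j. dens_cdf (cell_lo n (Suc k)) - dens_cdf (cell_lo n k))"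
    by (rule sum_lessThan_telescope[symmetric])
  also have "\<dots> = (\<Sum>k<j. integral {cell_lo n k..cell_lo n k + mesh n} dens)"
    using dens_cdf_split[of "cell_lo n k" "cell_lo n k + mesh n" for k] h0 unfolding cell_lo_Suc[OF n] by simp
  finally have tel: "dens_cdf (cell_lo n j) - dens_cdf (cell_lo n 0)
      = (\<Sum>k<j. integral {cell_lo n k..cell_lo n k + mesh n} dens)" .
  have "\<bar>riemann_sum n j - (dens_cdf (cell_lo n j) - dens_cdf (cell_lo n 0))\<bar>
      \<le> (\<Sum>k<j. \<bar>mesh n * dens (cell_lo n k + mesh n / 2) - integral {cell_lo n k..cell_lo n k + mesh n} dens\<bar>)"
    unfolding riemann_sum_def tel node_eq_cell_lo[OF n] sum_subtractf[symmetric] by (rule sum_abs)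
  also have "\<dots> \<le> (\<Sum>k<j. mesh n * \<eta> k)"
    by (intro sum_mono midpoint_integral_err[OF h0 dens_integrable_on])
       (use \<eta> j node_eq_cell_lo[OF n] in auto)
  also have "\<dots> \<le> (\<Sum>k\<le>n. mesh n * \<eta> k)"
    by (rule sum_mono2) (use j h0 \<eta>_nonneg in auto)
  finally show ?thesis .
qed

lemma integral_cells_eq:
  fixes f :: "real \<Rightarrow> real"
  assumes n: "n \<ge> 1" and f: "continuous_on UNIV f"
  shows "integral {cell_lo n 0..cell_lo n j} f = (\<Sum>k<j. integral {cell_lo n k..cell_lo n (Suc k)} f)"
proof (induction j)
  case (Suc j)
  have "cell_lo n 0 \<le> cell_lo n j" "cell_lo n j \<le> cell_lo n (Suc j)"
    unfolding cell_lo_def mag_def using grid_scale_pos[OF n] by (auto simp: divide_right_mono)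
  hence "integral {cell_lo n 0..cell_lo n j} f + integral {cell_lo n j..cell_lo n (Suc j)} f
      = integral {cell_lo n 0..cell_lo n (Suc j)} f"
    by (intro Henstock_Kurzweil_Integration.integral_combine integrable_continuous_interval
          continuous_on_subset[OF f]) auto
  thus ?case using Suc by simp
qed simp

lemma riemann_sum_err_profile_approx:
  assumes n: "n \<ge> 1"
    and \<eta>: "\<And>k y. k \<le> n \<Longrightarrow> y \<in> {cell_lo n k..cell_lo n k + mesh n} \<Longrightarrow>
            \<bar>dens y * err_profile y - dens (node n k) * err_profile (node n k)\<bar> \<le> \<eta> k"
  shows "(\<Sum>k\<le>n. mesh n * (dens (node n k) * err_profile (node n k)))
       \<le> integral {cell_lo n 0..cell_lo n (n+1)} (\<lambda>x. dens x * err_profile x) + (\<Sum>k\<le>n. mesh n * \<eta> k)"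
proof -
  let ?g = "\<lambda>x. dens x * err_profile x"
  have h0: "0 \<le> mesh n" using mesh_pos n by (simp add: less_imp_le)
  have "(\<Sum>k\<le>n. mesh n * ?g (node n k)) - integral {cell_lo n 0..cell_lo n (n+1)} ?g
      = (\<Sum>k<n+1. mesh n * ?g (cell_lo n k + mesh n / 2) - integral {cell_lo n k..cell_lo n k + mesh n} ?g)"
    unfolding integral_cells_eq[OF n continuous_on_dens_err_profile] sum_subtractf
      node_eq_cell_lo[OF n] cell_lo_Suc[OF n] by (simp add: lessThan_Suc_atMost)
  also have "\<dots> \<le> (\<Sum>k<n+1. mesh n * \<eta> k)"
    using order_trans[OF abs_ge_self midpoint_integral_err[OF h0
          integrable_continuous_interval[OF continuous_on_dens_err_profile]]]
    by (intro sum_mono) (use \<eta> node_eq_cell_lo[OF n] in \<open>auto simp: less_Suc_eq_le\<close>)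
  finally show ?thesis by (simp add: lessThan_Suc_atMost)
qed

lemma cell_outside_bulk:
  assumes n: "n \<ge> 1" and k: "k \<le> n" and y: "y \<in> {cell_lo n k..cell_lo n k + mesh n}"
    and R: "1 \<le> R" "mesh n \<le> 1" "R < \<bar>node n k\<bar>"
  shows "R / 2 \<le> \<bar>y\<bar>" "R / 2 \<le> \<bar>node n k\<bar>"
proof -
  have "\<bar>node n k\<bar> - \<bar>y\<bar> \<le> \<bar>y - node n k\<bar>"
    using abs_triangle_ineq2[of "node n k" y] by (simp add: abs_minus_commute)
  thus "R / 2 \<le> \<bar>y\<bar>" "R / 2 \<le> \<bar>node n k\<bar>" using cell_bounds(1)[OF n k y] R by linarith+
qed

text \<open>Inside the bulk \<open>|x| \<le> R\<close> the oscillation on a cell comes from the Lipschitz bound;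
  outside, both values are at most \<open>exp(-(R/2)\<^sup>4/12)\<close>.\<close>
lemma dens_cell_osc:
  assumes n: "n \<ge> 1" and k: "k \<le> n" and y: "y \<in> {cell_lo n k..cell_lo n k + mesh n}"
    and R: "1 \<le> R" "mesh n \<le> 1"
  shows "\<bar>dens y - dens (node n k)\<bar> \<le> (if \<bar>node n k\<bar> \<le> R then 2 * mesh n else exp (- ((R/2)^4) / 12))"
proof (cases "\<bar>node n k\<bar> \<le> R")
  case True
  thus ?thesis using dens_lipschitz[of y "node n k"] cell_bounds(1)[OF n k y] by simp
next
  case False
  hence r: "R / 2 \<le> \<bar>y\<bar>" "R / 2 \<le> \<bar>node n k\<bar>" using cell_outside_bulk[OF n k y R] by auto
  have "dens y \<le> exp (- ((R/2)^4) / 12)" "dens (node n k) \<le> exp (- ((R/2)^4) / 12)"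
    by (rule dens_le_exp_tail[OF r(1)] dens_le_exp_tail[OF r(2)], use R in simp)+
  hence "\<bar>dens y - dens (node n k)\<bar> \<le> exp (- ((R/2)^4) / 12)"
    using dens_pos[of y] dens_pos[of "node n k"] by (simp add: abs_le_iff)
  thus ?thesis using False by simp
qed

lemma dens_err_profile_cell_osc:
  assumes n: "n \<ge> 1" and k: "k \<le> n" and y: "y \<in> {cell_lo n k..cell_lo n k + mesh n}"
    and R: "1 \<le> R" "mesh n \<le> 1"
  defines "T \<equiv> (real n + 1) / grid_scale n"
  shows "\<bar>dens y * err_profile y - dens (node n k) * err_profile (node n k)\<bar>
           \<le> (if \<bar>node n k\<bar> \<le> R then 2 * (R+1)^9 * mesh n else exp (- ((R/2)^4) / 12) * err_profile T)"
proof (cases "\<bar>node n k\<bar> \<le> R")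
  case True
  have d: "\<bar>y - node n k\<bar> \<le> mesh n / 2" by (rule cell_bounds(1)[OF n k y])
  moreover have "\<bar>y\<bar> - \<bar>node n k\<bar> \<le> \<bar>y - node n k\<bar>" by (rule abs_triangle_ineq2)
  ultimately have "\<bar>dens y * err_profile y - dens (node n k) * err_profile (node n k)\<bar> \<le> 4 * (R+1)^9 * \<bar>y - node n k\<bar>"
    using True R by (intro dens_err_profile_lipschitz) auto
  also have "\<dots> \<le> 4 * (R+1)^9 * (mesh n / 2)" using d R by (intro mult_left_mono) auto
  also have "\<dots> = 2 * (R+1)^9 * mesh n" by simp
  finally show ?thesis using True by simp
next
  case False
  have "node n k \<in> {cell_lo n k..cell_lo n k + mesh n}" using node_eq_cell_lo[OF n, of k] mesh_pos[OF n] by simp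
  hence T: "\<bar>y\<bar> \<le> T" "\<bar>node n k\<bar> \<le> T" unfolding T_def using cell_bounds(2)[OF n k] y by auto
  have r: "R / 2 \<le> \<bar>y\<bar>" "R / 2 \<le> \<bar>node n k\<bar>" using cell_outside_bulk[OF n k y R] False by auto
  have "dens y * err_profile y \<le> exp (- ((R/2)^4) / 12) * err_profile T"
    by (intro mult_mono dens_le_exp_tail[OF r(1)] err_profile_mono[OF T(1)]) (use R err_profile_nonneg in auto)
  moreover have "dens (node n k) * err_profile (node n k) \<le> exp (- ((R/2)^4) / 12) * err_profile T"
    by (intro mult_mono dens_le_exp_tail[OF r(2)] err_profile_mono[OF T(2)]) (use R err_profile_nonneg in auto)
  moreover have "0 \<le> dens y * err_profile y" "0 \<le> dens (node n k) * err_profile (node n k)"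
    using dens_pos err_profile_nonneg by (auto intro: mult_nonneg_nonneg less_imp_le)
  ultimately have "\<bar>dens y * err_profile y - dens (node n k) * err_profile (node n k)\<bar>
      \<le> exp (- ((R/2)^4) / 12) * err_profile T" by (simp add: abs_le_iff)
  thus ?thesis using False by simp
qed

lemma riemann_sum_approx_cutoff:
  assumes n: "n \<ge> 1" and R: "1 \<le> R" "mesh n \<le> 1" and j: "j \<le> n + 1"
  shows "\<bar>riemann_sum n j - (dens_cdf (cell_lo n j) - dens_cdf (cell_lo n 0))\<bar> \<le> riemann_err n R"
proof -
  define E where "E = exp (- ((R/2)^4) / 12)"
  define \<eta> where "\<eta> k = (if \<bar>node n k\<bar> \<le> R then 2 * mesh n else E)" for k
  have h0: "0 < mesh n" using mesh_pos n by simp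
  have "\<bar>riemann_sum n j - (dens_cdf (cell_lo n j) - dens_cdf (cell_lo n 0))\<bar> \<le> (\<Sum>k\<le>n. mesh n * \<eta> k)"
  proof (rule riemann_sum_approx[OF n j])
    fix k y assume "k \<le> n" "y \<in> {cell_lo n k..cell_lo n k + mesh n}"
    from dens_cell_osc[OF n this R] show "\<bar>dens y - dens (node n k)\<bar> \<le> \<eta> k" unfolding \<eta>_def E_def .
  qed (use h0 E_def \<eta>_def in auto)
  also have "(\<Sum>k\<le>n. mesh n * \<eta> k) = mesh n * (\<Sum>k\<le>n. \<eta> k)" by (simp add: sum_distrib_left)
  also have "(\<Sum>k\<le>n. \<eta> k) \<le> 2 * mesh n * real (card {k \<in> {..n}. \<bar>node n k\<bar> \<le> R}) + E * (real n + 1)"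
    unfolding \<eta>_def by (rule sum_if_le_card) (use h0 E_def in auto)
  also have "\<dots> \<le> 2 * mesh n * (2 * R * grid_scale n + 1) + E * (real n + 1)"
    using card_node_le[OF n, of R] R h0 by (intro add_right_mono mult_left_mono) auto
  finally show ?thesis unfolding riemann_err_def E_def using h0 by (simp add: mult_left_mono)
qed

lemma riemann_sum_err_profile_le:
  assumes n: "n \<ge> 1" and R: "1 \<le> R" "mesh n \<le> 1"
  shows "(\<Sum>k\<le>n. mesh n * (dens (node n k) * err_profile (node n k)))
           \<le> 287/80 * dens_mass + riemann_err_profile n R"
proof -
  define E where "E = exp (- ((R/2)^4) / 12)"
  define T where "T = (real n + 1) / grid_scale n"
  define \<eta> where "\<eta> k = (if \<bar>node n k\<bar> \<le> R then 2 * (R+1)^9 * mesh n else E * err_profile T)" for k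
  have h0: "0 < mesh n" using mesh_pos n by simp
  have T0: "0 \<le> T" unfolding T_def using grid_scale_pos[OF n] by simp
  have "(\<Sum>k\<le>n. mesh n * (dens (node n k) * err_profile (node n k)))
      \<le> integral {cell_lo n 0..cell_lo n (n+1)} (\<lambda>x. dens x * err_profile x) + (\<Sum>k\<le>n. mesh n * \<eta> k)"
  proof (rule riemann_sum_err_profile_approx[OF n])
    fix k y assume "k \<le> n" "y \<in> {cell_lo n k..cell_lo n k + mesh n}"
    from dens_err_profile_cell_osc[OF n this R]
    show "\<bar>dens y * err_profile y - dens (node n k) * err_profile (node n k)\<bar> \<le> \<eta> k"
      unfolding \<eta>_def E_def T_def .
  qed
  also have "integral {cell_lo n 0..cell_lo n (n+1)} (\<lambda>x. dens x * err_profile x) \<le> 287/80 * dens_mass"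
    using integral_dens_err_profile_le[OF T0] integral_dens_le_mass[of "-T" T] T0
    unfolding cell_lo_0 cell_lo_last T_def[symmetric] by simp
  also have "(\<Sum>k\<le>n. mesh n * \<eta> k) = mesh n * (\<Sum>k\<le>n. \<eta> k)" by (simp add: sum_distrib_left)
  also have "(\<Sum>k\<le>n. \<eta> k) \<le> 2 * (R+1)^9 * mesh n * real (card {k \<in> {..n}. \<bar>node n k\<bar> \<le> R}) + E * err_profile T * (real n + 1)"
    unfolding \<eta>_def by (rule sum_if_le_card) (use h0 E_def R err_profile_nonneg[of T] in auto)
  also have "\<dots> \<le> 2 * (R+1)^9 * mesh n * (2 * R * grid_scale n + 1) + E * err_profile T * (real n + 1)"
    using card_node_le[OF n, of R] R h0 by (intro add_right_mono mult_left_mono) auto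
  finally show ?thesis unfolding riemann_err_profile_def E_def T_def using h0 by (simp add: mult_left_mono)
qed

lemma dens_cdf_tails:
  assumes n: "n \<ge> 1"
  shows "dens_cdf (cell_lo n 0) \<le> tail_err n" "dens_mass - dens_cdf (cell_lo n (n+1)) \<le> tail_err n"
proof -
  define T where "T = (real n + 1) / grid_scale n"
  have T0: "0 \<le> T" unfolding T_def using grid_scale_pos[OF n] by simp
  have "real n * real n ^ 3 \<le> (real n + 1)^4"
    using power_mono[of "real n" "real n + 1" 4] by (simp add: power_eq_if)
  hence "real n \<le> T^4"
    unfolding T_def power_divide grid_scale_pow4[OF n] using n by (simp add: pos_le_divide_eq)
  hence "exp (- (T^4) / 24) * dens_sqrt_mass \<le> tail_err n"
    unfolding tail_err_def using dens_sqrt_mass_nonneg by (simp add: mult.commute mult_left_mono)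
  thus "dens_cdf (cell_lo n 0) \<le> tail_err n" "dens_mass - dens_cdf (cell_lo n (n+1)) \<le> tail_err n"
    using dens_cdf_left_tail[OF T0] dens_cdf_right_tail[OF T0] unfolding cell_lo_0 cell_lo_last T_def[symmetric]
    by linarith+
qed

lemma dens_cdf_nodes_below_err:
  assumes n: "n \<ge> 1"
  shows "\<bar>dens_cdf (cell_lo n (nodes_below n a)) - dens_cdf a\<bar> \<le> mesh n / 2 + tail_err n"
proof -
  define j where "j = nodes_below n a"
  have h0: "0 < mesh n" using mesh_pos n by simp
  have tl0: "0 \<le> tail_err n" unfolding tail_err_def using dens_sqrt_mass_nonneg by simp
  have "\<bar>dens_cdf (cell_lo n j) - dens_cdf a\<bar> \<le> mesh n / 2 + tail_err n"
  proof (cases "a \<le> cell_lo n j")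
    case True
    have L: "0 \<le> dens_cdf (cell_lo n j) - dens_cdf a" "dens_cdf (cell_lo n j) - dens_cdf a \<le> cell_lo n j - a"
      using dens_cdf_mono_lipschitz[OF True] by auto
    show ?thesis
    proof (cases j)
      case 0
      thus ?thesis using L h0 dens_cdf_tails(1)[OF n] dens_cdf_nonneg[of a] by simp
    next
      case (Suc i)
      have "node n i \<le> a" using node_le_of_less_nodes_below[OF n, of i a] Suc unfolding j_def by simp
      hence "cell_lo n j - a \<le> mesh n / 2" unfolding Suc cell_lo_Suc[OF n] node_eq_cell_lo[OF n] by simp
      thus ?thesis using L tl0 by simp
    qed
  next
    case False
    have L: "0 \<le> dens_cdf a - dens_cdf (cell_lo n j)" "dens_cdf a - dens_cdf (cell_lo n j) \<le> a - cell_lo n j"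
      using dens_cdf_mono_lipschitz[of "cell_lo n j" a] False by auto
    show ?thesis
    proof (cases "j \<le> n")
      case True
      have "a < node n j" using less_node_of_nodes_below_le[OF n, of a j] True unfolding j_def by simp
      hence "a - cell_lo n j \<le> mesh n / 2" unfolding node_eq_cell_lo[OF n] by simp
      thus ?thesis using L tl0 by simp
    next
      case False
      hence "j = n + 1" using nodes_below_le[of n a] unfolding j_def by simp
      thus ?thesis using L h0 dens_cdf_tails(2)[OF n] dens_cdf_le_mass[of a] by simp
    qed
  qed
  thus ?thesis unfolding j_def .
qed

section \<open>The estimate for a fixed \<open>n\<close>\<close>

definition rate :: "nat \<Rightarrow> real" where "rate n = real n powr (-1/2)"

lemma rate_nonneg: "0 \<le> rate n" unfolding rate_def by simp

lemma rate_mult_pow: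
  assumes "n \<ge> 1" "4 * k = 3 * m + 2"
  shows "rate n * real n ^ k = grid_scale n ^ m"
proof -
  have p: "0 < real n" using assms by simp
  have "rate n * real n ^ k = real n powr (-1/2) * real n powr real k"
    unfolding rate_def using p by (simp add: powr_realpow)
  also have "\<dots> = real n powr (real m * (3/4))"
    unfolding powr_add[symmetric] using assms(2) by (intro arg_cong[where f="(powr) (real n)"]) linarith
  also have "\<dots> = grid_scale n ^ m" unfolding grid_scale_def using p by (simp add: powr_power)
  finally show ?thesis .
qed

lemma log_corr_err_eq_profile:
  assumes "n \<ge> 1"
  shows "5/4 * (mag n k)^2 / (real n)^2 + 4/45 * (mag n k)^6 / (real n)^5 = rate n * err_profile (node n k)"
proof -
  have c: "grid_scale n > 0" "real n > 0" using grid_scale_pos assms by auto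
  have a: "(mag n k)^2 / (real n)^2 = rate n * (mag n k)^2 / (grid_scale n)^2"
    using rate_mult_pow[OF assms, of 2 2] c by (simp add: field_simps)
  have b: "(mag n k)^6 / (real n)^5 = rate n * (mag n k)^6 / (grid_scale n)^6"
    using rate_mult_pow[OF assms, of 5 6] c by (simp add: field_simps)
  have "5/4 * (mag n k)^2 / (real n)^2 + 4/45 * (mag n k)^6 / (real n)^5
      = 5/4 * ((mag n k)^2 / (real n)^2) + 4/45 * ((mag n k)^6 / (real n)^5)" by simp
  also have "\<dots> = 5/4 * (rate n * (mag n k)^2 / (grid_scale n)^2) + 4/45 * (rate n * (mag n k)^6 / (grid_scale n)^6)"
    unfolding a b ..
  also have "\<dots> = rate n * err_profile (node n k)"
    unfolding err_profile_def node_def power_divide by (simp add: algebra_simps)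
  finally show ?thesis .
qed

text \<open>In the bulk \<open>exp(log_corr n k - log_corr n (mid_level n))\<close> is within
  \<open>11/10 n\<^sup>-\<^sup>1\<^sup>/\<^sup>2 err_profile\<close> of 1; outside it is at most \<open>exp(5/4) \<le> 8\<close>.\<close>
lemma node_weight_err:
  assumes n: "n \<ge> 1" and k: "k \<le> n"
    and R: "1 \<le> R" "R * grid_scale n \<le> real n / 2" "rate n * err_profile R \<le> 1/20"
  shows "\<bar>node_weight n k - dens (node n k)\<bar>
           \<le> 11/10 * rate n * (dens (node n k) * err_profile (node n k)) + 9 * exp (- (R^4) / 12)"
proof -
  define E where "E = log_corr n k - log_corr n (mid_level n)"
  define x where "x = node n k"
  have f0: "0 < dens x" by (rule dens_pos)
  have "node_weight n k - dens x = dens x * (exp E - 1)"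
    unfolding node_weight_def E_def x_def by (simp add: algebra_simps)
  hence eq: "\<bar>node_weight n k - dens x\<bar> = dens x * \<bar>exp E - 1\<bar>" using f0 by (simp add: abs_mult)
  have p: "0 \<le> 11/10 * rate n * (dens x * err_profile x)"
    using rate_nonneg f0 err_profile_nonneg[of x] by simp
  show ?thesis
  proof (cases "\<bar>x\<bar> \<le> R")
    case True
    hence "\<bar>mag n k\<bar> \<le> real n / 2"
      using grid_scale_pos[OF n] R unfolding x_def node_def by (simp add: abs_divide pos_divide_le_eq)
    hence E1: "\<bar>E\<bar> \<le> rate n * err_profile x"
      using abs_log_corr_diff_le[OF k] unfolding E_def log_corr_err_eq_profile[OF n] x_def by simp
    moreover have "rate n * err_profile x \<le> rate n * err_profile R"
      using err_profile_mono[OF True] rate_nonneg by (intro mult_left_mono) auto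
    ultimately have "\<bar>E\<bar> \<le> 1/20" using R by linarith
    hence "\<bar>E\<bar> * exp \<bar>E\<bar> \<le> rate n * err_profile x * (11/10)"
      using E1 exp_le_11_10 by (intro mult_mono) auto
    hence "\<bar>exp E - 1\<bar> \<le> rate n * err_profile x * (11/10)"
      using abs_exp_minus_1_le[of E] by linarith
    hence "dens x * \<bar>exp E - 1\<bar> \<le> 11/10 * rate n * (dens x * err_profile x)"
      using f0 by (simp add: mult_left_mono mult_ac)
    moreover have "0 \<le> 9 * exp (- (R^4) / 12)" by simp
    ultimately show ?thesis using eq unfolding x_def by linarith
  next
    case False
    have "\<bar>mag n k\<bar> \<le> real n" unfolding mag_def using k by (simp add: abs_le_iff)
    hence "(mag n k)^2 / (real n)^2 \<le> 1"
      using n power_mono[of "\<bar>mag n k\<bar>" "real n" 2] by (simp add: divide_le_eq_1)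
    hence "E \<le> 5/4" using log_corr_diff_le[OF k] unfolding E_def by linarith
    hence "exp E \<le> 8" using exp_5_4_le_8 by (meson exp_le_cancel_iff order_trans)
    hence "\<bar>exp E - 1\<bar> \<le> 9" unfolding abs_le_iff using exp_gt_zero[of E] by linarith
    moreover have "dens x \<le> exp (- (R^4) / 12)" by (rule dens_le_exp_tail) (use False R in auto)
    ultimately have "dens x * \<bar>exp E - 1\<bar> \<le> exp (- (R^4) / 12) * 9" using f0 by (intro mult_mono) auto
    thus ?thesis using eq p unfolding x_def by simp
  qed
qed

lemma sum_node_weight_err:
  assumes n: "n \<ge> 1" and R: "1 \<le> R" "mesh n \<le> 1" "R * grid_scale n \<le> real n / 2"
    "rate n * err_profile R \<le> 1/20"
  shows "mesh n * (\<Sum>k\<le>n. \<bar>node_weight n k - dens (node n k)\<bar>)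
     \<le> 11/10 * rate n * (287/80 * dens_mass + riemann_err_profile n R) + 9 * (real n + 1) * mesh n * exp (- (R^4) / 12)"
proof -
  have h0: "0 < mesh n" using mesh_pos n by simp
  have "mesh n * (\<Sum>k\<le>n. \<bar>node_weight n k - dens (node n k)\<bar>)
      \<le> mesh n * (\<Sum>k\<le>n. 11/10 * rate n * (dens (node n k) * err_profile (node n k)) + 9 * exp (- (R^4) / 12))"
    using node_weight_err[OF n _ R(1,3,4)] h0 by (intro mult_left_mono sum_mono) auto
  also have "\<dots> = 11/10 * rate n * (\<Sum>k\<le>n. mesh n * (dens (node n k) * err_profile (node n k)))
      + 9 * (real n + 1) * mesh n * exp (- (R^4) / 12)"
    by (simp add: sum.distrib sum_distrib_left algebra_simps)
  also have "\<dots> \<le> 11/10 * rate n * (287/80 * dens_mass + riemann_err_profile n R)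
      + 9 * (real n + 1) * mesh n * exp (- (R^4) / 12)"
    using riemann_sum_err_profile_le[OF n R(1,2)] rate_nonneg by (intro add_right_mono mult_left_mono) auto
  finally show ?thesis .
qed

lemma ratio_perturb:
  fixes N S M Z :: real
  assumes "0 < S" "0 < Z" "0 \<le> M" "M \<le> Z"
  shows "\<bar>N / S - M / Z\<bar> \<le> (\<bar>N - M\<bar> + \<bar>S - Z\<bar>) / S"
proof -
  have eq: "N / S - M / Z = (N - M) / S + (M / Z) * ((Z - S) / S)" using assms by (simp add: field_simps)
  have "\<bar>M / Z\<bar> \<le> 1" using assms by (simp add: abs_divide divide_le_eq_1_pos)
  hence "\<bar>(M / Z) * ((Z - S) / S)\<bar> \<le> 1 * (\<bar>S - Z\<bar> / S)"
    unfolding abs_mult using assms by (intro mult_mono) (auto simp: abs_divide abs_minus_commute)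
  moreover have "\<bar>(N - M) / S\<bar> = \<bar>N - M\<bar> / S" using assms by (simp add: abs_divide)
  ultimately have "\<bar>N / S - M / Z\<bar> \<le> \<bar>N - M\<bar> / S + \<bar>S - Z\<bar> / S"
    unfolding eq using abs_triangle_ineq[of "(N - M) / S" "(M / Z) * ((Z - S) / S)"] by linarith
  thus ?thesis by (simp add: add_divide_distrib)
qed

lemma ratio_sums_perturb:
  fixes A B :: "nat \<Rightarrow> real"
  assumes fin: "finite I" and JI: "J \<subseteq> I" and A0: "\<And>k. k \<in> I \<Longrightarrow> 0 \<le> A k" and B0: "\<And>k. k \<in> I \<Longrightarrow> 0 \<le> B k"
    and DB: "(\<Sum>k\<in>I. \<bar>A k - B k\<bar>) < (\<Sum>k\<in>I. B k)"
  shows "\<bar>(\<Sum>k\<in>J. A k) / (\<Sum>k\<in>I. A k) - (\<Sum>k\<in>J. B k) / (\<Sum>k\<in>I. B k)\<bar>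
     \<le> 2 * (\<Sum>k\<in>I. \<bar>A k - B k\<bar>) / ((\<Sum>k\<in>I. B k) - (\<Sum>k\<in>I. \<bar>A k - B k\<bar>))"
proof -
  define D where "D = (\<Sum>k\<in>I. \<bar>A k - B k\<bar>)"
  define SA where "SA = (\<Sum>k\<in>I. A k)"
  define SB where "SB = (\<Sum>k\<in>I. B k)"
  have D0: "0 \<le> D" unfolding D_def by (simp add: sum_nonneg)
  have SAB: "\<bar>SA - SB\<bar> \<le> D" unfolding SA_def SB_def D_def sum_subtractf[symmetric] by (rule sum_abs)
  have SBD: "0 < SB - D" using DB unfolding D_def SB_def by simp
  hence SA0: "0 < SA" using SAB by linarith
  have "\<bar>(\<Sum>k\<in>J. A k) - (\<Sum>k\<in>J. B k)\<bar> \<le> (\<Sum>k\<in>J. \<bar>A k - B k\<bar>)" unfolding sum_subtractf[symmetric] by (rule sum_abs)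
  also have "\<dots> \<le> D" unfolding D_def by (rule sum_mono2[OF fin JI]) auto
  finally have AB: "\<bar>(\<Sum>k\<in>J. A k) - (\<Sum>k\<in>J. B k)\<bar> \<le> D" .
  have "0 \<le> (\<Sum>k\<in>J. B k)" "(\<Sum>k\<in>J. B k) \<le> SB"
    unfolding SB_def using B0 JI by (auto intro: sum_nonneg sum_mono2[OF fin JI])
  hence "\<bar>(\<Sum>k\<in>J. A k) / SA - (\<Sum>k\<in>J. B k) / SB\<bar>
      \<le> (\<bar>(\<Sum>k\<in>J. A k) - (\<Sum>k\<in>J. B k)\<bar> + \<bar>SA - SB\<bar>) / SA"
    using SBD D0 by (intro ratio_perturb[OF SA0]) auto
  also have "\<dots> \<le> (D + D) / SA" using AB SAB SA0 by (intro divide_right_mono) auto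
  also have "\<dots> \<le> 2 * D / (SB - D)"
  proof (rule frac_le)
    show "SB - D \<le> SA" using SAB by linarith
  qed (use SBD D0 in auto)
  finally show ?thesis unfolding D_def SA_def SB_def .
qed

text \<open>The conditions on the bulk cutoff \<open>R\<close> under which all error terms add up to at most
  \<open>11 n\<^sup>-\<^sup>1\<^sup>/\<^sup>2\<close>.\<close>
definition cutoff_ok :: "nat \<Rightarrow> real \<Rightarrow> bool" where
  "cutoff_ok n R \<longleftrightarrow> 1 \<le> n \<and> 1 \<le> R \<and> mesh n \<le> 1 \<and> R * grid_scale n \<le> real n / 2
     \<and> rate n * err_profile R \<le> 1/20 \<and> rate n \<le> 1/100
     \<and> riemann_err n R \<le> dens_mass / 200 * rate n \<and> mesh n / 2 \<le> dens_mass / 200 * rate n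
     \<and> tail_err n \<le> dens_mass / 200 * rate n
     \<and> 9 * (real n + 1) * mesh n * exp (- (R^4) / 12) \<le> dens_mass / 200 * rate n
     \<and> riemann_err_profile n R \<le> dens_mass / 100"

lemma riemann_sum_mass_err:
  assumes "n \<ge> 1" "1 \<le> R" "mesh n \<le> 1"
  shows "\<bar>riemann_sum n (n+1) - dens_mass\<bar> \<le> riemann_err n R + 2 * tail_err n"
  using riemann_sum_approx_cutoff[OF assms, of "n+1"] dens_cdf_tails[OF assms(1)]
    dens_cdf_nonneg[of "cell_lo n 0"] dens_cdf_le_mass[of "cell_lo n (n+1)"]
  unfolding abs_le_iff by linarith

lemma riemann_sum_cdf_err:
  assumes "n \<ge> 1" "1 \<le> R" "mesh n \<le> 1"
  shows "\<bar>riemann_sum n (nodes_below n a) - dens_cdf a\<bar> \<le> riemann_err n R + mesh n / 2 + 2 * tail_err n"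
  using riemann_sum_approx_cutoff[OF assms nodes_below_le[of n a]] dens_cdf_tails[OF assms(1)]
    dens_cdf_nonneg[of "cell_lo n 0"] dens_cdf_nodes_below_err[OF assms(1), of a]
  unfolding abs_le_iff by linarith

lemma riemann_sum_mass_ge:
  assumes "cutoff_ok n R"
  shows "99/100 * dens_mass \<le> riemann_sum n (n+1)"
proof -
  have "dens_mass * rate n \<le> dens_mass / 100"
    using assms dens_mass_pos unfolding cutoff_ok_def by (simp add: mult_left_mono)
  thus ?thesis using riemann_sum_mass_err[of n R] assms unfolding cutoff_ok_def abs_le_iff by linarith
qed

lemma riemann_ratio_err:
  assumes "cutoff_ok n R"
  shows "\<bar>riemann_sum n (nodes_below n a) / riemann_sum n (n+1) - W_inf_cdf a\<bar> \<le> 7/198 * rate n"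
proof -
  let ?S = "riemann_sum n (n+1)" and ?N = "riemann_sum n (nodes_below n a)"
  have c: "1 \<le> n" "1 \<le> R" "mesh n \<le> 1" using assms unfolding cutoff_ok_def by auto
  have S: "99/100 * dens_mass \<le> ?S" by (rule riemann_sum_mass_ge[OF assms])
  have "\<bar>?N / ?S - W_inf_cdf a\<bar> \<le> (\<bar>?N - dens_cdf a\<bar> + \<bar>?S - dens_mass\<bar>) / ?S"
    unfolding W_inf_cdf_eq_dens_cdf using S dens_mass_pos
    by (intro ratio_perturb dens_cdf_nonneg dens_cdf_le_mass) auto
  also have "\<dots> \<le> (7/200 * (dens_mass * rate n)) / (99/100 * dens_mass)"
  proof (rule frac_le)
    show "\<bar>?N - dens_cdf a\<bar> + \<bar>?S - dens_mass\<bar> \<le> 7/200 * (dens_mass * rate n)"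
      using riemann_sum_mass_err[OF c] riemann_sum_cdf_err[OF c, of a] assms unfolding cutoff_ok_def by linarith
  qed (use S dens_mass_pos rate_nonneg[of n] in auto)
  also have "\<dots> = 7/198 * rate n" using dens_mass_pos by (simp add: field_simps)
  finally show ?thesis .
qed

lemma node_weight_ratio_err:
  assumes "cutoff_ok n R"
  shows "\<bar>(\<Sum>k<nodes_below n a. node_weight n k) / (\<Sum>k\<le>n. node_weight n k)
           - riemann_sum n (nodes_below n a) / riemann_sum n (n+1)\<bar> \<le> 160/19 * rate n"
proof -
  define j where "j = nodes_below n a"
  define B where "B = (\<Sum>k\<le>n. dens (node n k))"
  define D where "D = (\<Sum>k\<le>n. \<bar>node_weight n k - dens (node n k)\<bar>)"
  define Z where "Z = dens_mass"
  define s where "s = rate n"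
  have c: "1 \<le> n" "1 \<le> R" "mesh n \<le> 1" "R * grid_scale n \<le> real n / 2" "s * err_profile R \<le> 1/20"
    "riemann_err_profile n R \<le> Z / 100" "9 * (real n + 1) * mesh n * exp (- (R^4) / 12) \<le> Z / 200 * s"
    "s \<le> 1/100"
    using assms unfolding cutoff_ok_def Z_def s_def by auto
  have h0: "0 < mesh n" using mesh_pos c by simp
  have Z0: "0 < Z" unfolding Z_def by (rule dens_mass_pos)
  have s0: "0 \<le> s" unfolding s_def by (rule rate_nonneg)
  have S: "riemann_sum n (n+1) = mesh n * B"
    unfolding riemann_sum_def B_def by (simp add: sum_distrib_left lessThan_Suc_atMost)
  have S_ge: "99/100 * Z \<le> mesh n * B" using riemann_sum_mass_ge[OF assms] unfolding S Z_def .
  have "11/10 * s * (287/80 * Z + riemann_err_profile n R) \<le> 11/10 * s * (287/80 * Z + Z / 100)"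
    using c s0 by (intro mult_left_mono add_left_mono) auto
  also have "\<dots> = 11/10 * (287/80 + 1/100) * (Z * s)" by (simp add: algebra_simps)
  finally have hD: "mesh n * D \<le> 4 * (Z * s)"
    using sum_node_weight_err[OF c(1-4) c(5)[unfolded s_def]] c(7) mult_nonneg_nonneg[OF less_imp_le[OF Z0] s0]
    unfolding D_def Z_def s_def by argo
  have "Z * s \<le> Z / 100" using c Z0 by (simp add: mult_left_mono)
  moreover have "mesh n * (B - D) = mesh n * B - mesh n * D" by (simp add: algebra_simps)
  ultimately have DB: "mesh n * D < mesh n * B" "95/100 * Z \<le> mesh n * (B - D)"
    using hD S_ge Z0 by linarith+
  have "riemann_sum n j / riemann_sum n (n+1) = (\<Sum>k<j. dens (node n k)) / B"
    unfolding S unfolding riemann_sum_def sum_distrib_left[symmetric] using h0 by simp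
  moreover have "\<bar>(\<Sum>k<j. node_weight n k) / (\<Sum>k\<le>n. node_weight n k) - (\<Sum>k<j. dens (node n k)) / B\<bar>
      \<le> 2 * D / (B - D)"
    unfolding B_def D_def
    using DB nodes_below_le[of n a] h0 node_weight_nonneg dens_pos unfolding B_def D_def j_def
    by (intro ratio_sums_perturb) (auto intro: less_imp_le[OF dens_pos])
  moreover have "2 * D / (B - D) = 2 * (mesh n * D) / (mesh n * (B - D))" using h0 by simp
  moreover have "\<dots> \<le> 2 * (4 * (Z * s)) / (95/100 * Z)"
  proof (rule frac_le)
    show "2 * (mesh n * D) \<le> 2 * (4 * (Z * s))" using hD by linarith
  qed (use DB Z0 s0 in auto)
  moreover have "\<dots> = 160/19 * s" using Z0 by (simp add: field_simps)
  ultimately show ?thesis unfolding j_def s_def by linarith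
qed

lemma cw_cdf_err_le:
  assumes "cutoff_ok n R"
  shows "\<bar>cw_prob n (\<lambda>\<sigma>. magnetization n \<sigma> / real n powr (3/4) \<le> a) - W_inf_cdf a\<bar> \<le> 11 * rate n"
proof -
  have "1 \<le> n" using assms unfolding cutoff_ok_def by simp
  thus ?thesis
    using node_weight_ratio_err[OF assms, of a] riemann_ratio_err[OF assms, of a] rate_nonneg[of n]
    unfolding cw_prob_eq_node_weights[OF \<open>1 \<le> n\<close>] by linarith
qed

section \<open>The cutoff \<open>R = n\<^sup>1\<^sup>/\<^sup>4\<^sup>0\<close>\<close>

definition cutoff :: "nat \<Rightarrow> real" where "cutoff n = real n powr (1/40)"

lemma eventually_le_of_tendsto_0:
  fixes g :: "nat \<Rightarrow> real"
  assumes "g \<longlonglongrightarrow> 0" "0 < C"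
  shows "eventually (\<lambda>n. g n \<le> C) sequentially"
  using order_tendstoD(2)[OF assms] by (auto elim: eventually_mono)

lemma eventually_le_rate:
  fixes f :: "nat \<Rightarrow> real"
  assumes "(\<lambda>n. f n / real n powr (-1/2)) \<longlonglongrightarrow> 0" "0 < C"
  shows "eventually (\<lambda>n. f n \<le> C * rate n) sequentially"
  using eventually_le_of_tendsto_0[OF assms] eventually_gt_at_top[of 0]
  by eventually_elim (simp add: rate_def pos_divide_le_eq mult.commute)

lemma eventually_tail_err_le: "eventually (\<lambda>n. tail_err n \<le> dens_mass / 200 * rate n) sequentially"
proof -
  have "eventually (\<lambda>n. exp (- real n / 24) \<le> (dens_mass / 200 / (dens_sqrt_mass + 1)) * rate n) sequentially"
    by (rule eventually_le_rate) (real_asymp, use dens_mass_pos dens_sqrt_mass_nonneg in simp)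
  thus ?thesis
  proof eventually_elim
    case (elim n)
    have "tail_err n \<le> dens_sqrt_mass * ((dens_mass / 200 / (dens_sqrt_mass + 1)) * rate n)"
      unfolding tail_err_def using elim dens_sqrt_mass_nonneg by (intro mult_left_mono) auto
    also have "\<dots> = dens_sqrt_mass / (dens_sqrt_mass + 1) * (dens_mass / 200 * rate n)"
      using dens_sqrt_mass_nonneg by (simp add: field_simps)
    also have "\<dots> \<le> dens_mass / 200 * rate n"
      using dens_sqrt_mass_nonneg dens_mass_pos rate_nonneg[of n]
      by (intro mult_left_le_one_le) auto
    finally show ?case .
  qed
qed

lemma eventually_cutoff_ok: "eventually (\<lambda>n. cutoff_ok n (cutoff n)) sequentially"
proof -
  have Z: "0 < dens_mass / 200" "0 < dens_mass / 100" using dens_mass_pos by auto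
  have "filterlim (\<lambda>n::nat. real n powr (1/40)) at_top sequentially" by real_asymp
  hence "eventually (\<lambda>n. 1 \<le> cutoff n) sequentially" unfolding cutoff_def by (simp add: filterlim_at_top)
  moreover have "eventually (\<lambda>n. mesh n \<le> 1) sequentially"
    by (rule eventually_le_of_tendsto_0) (unfold mesh_def grid_scale_def, real_asymp, simp)
  moreover have "eventually (\<lambda>n. cutoff n * grid_scale n \<le> real n / 2) sequentially"
  proof -
    have "eventually (\<lambda>n. cutoff n * grid_scale n / real n \<le> 1/2) sequentially"
      by (rule eventually_le_of_tendsto_0) (unfold cutoff_def grid_scale_def, real_asymp, simp)
    thus ?thesis using eventually_gt_at_top[of 0] by eventually_elim (simp add: divide_le_eq)
  qed
  moreover have "eventually (\<lambda>n. rate n * err_profile (cutoff n) \<le> 1/20) sequentially"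
    by (rule eventually_le_of_tendsto_0) (unfold rate_def err_profile_def cutoff_def, real_asymp, simp)
  moreover have "eventually (\<lambda>n. rate n \<le> 1/100) sequentially"
    by (rule eventually_le_of_tendsto_0) (unfold rate_def, real_asymp, simp)
  moreover have "eventually (\<lambda>n. riemann_err n (cutoff n) \<le> dens_mass / 200 * rate n) sequentially"
    by (rule eventually_le_rate[OF _ Z(1)]) (unfold riemann_err_def mesh_def grid_scale_def cutoff_def, real_asymp)
  moreover have "eventually (\<lambda>n. mesh n / 2 \<le> dens_mass / 200 * rate n) sequentially"
    by (rule eventually_le_rate[OF _ Z(1)]) (unfold mesh_def grid_scale_def, real_asymp)
  moreover have "eventually (\<lambda>n. 9 * (real n + 1) * mesh n * exp (- ((cutoff n)^4) / 12)
      \<le> dens_mass / 200 * rate n) sequentially"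
    by (rule eventually_le_rate[OF _ Z(1)]) (unfold mesh_def grid_scale_def cutoff_def, real_asymp)
  moreover have "eventually (\<lambda>n. riemann_err_profile n (cutoff n) \<le> dens_mass / 100) sequentially"
    by (rule eventually_le_of_tendsto_0[OF _ Z(2)])
       (unfold riemann_err_profile_def mesh_def grid_scale_def cutoff_def err_profile_def, real_asymp)
  ultimately show ?thesis
    using eventually_tail_err_le eventually_ge_at_top[of 1]
    unfolding cutoff_ok_def by eventually_elim auto
qed

theorem theorem4p4:
  shows "\<forall>\<^sub>F n in sequentially.
           (SUP a\<in>(UNIV::real set). \<bar>cw_prob n (\<lambda>\<sigma>. magnetization n \<sigma> / real n powr (3/4) \<le> a) - W_inf_cdf a\<bar>)
             \<le> 11 * real n powr (-1/2)"
  using eventually_cutoff_ok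
proof eventually_elim
  case (elim n)
  show ?case unfolding rate_def[symmetric] by (rule cSUP_least) (use cw_cdf_err_le[OF elim] in auto)
qed

end
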